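(* Let $q$ be a prime power. For even $n$, let $\mathcal{G}_{n,q}$ be the number of self-dual codes of length $n$ over $\mathbb{F}_q$ and $\mathcal{C}_{n,q}$ the number of indecomposable self-dual codes of length $n$ over $\mathbb{F}_q$. Then $$\lim_{n\to\infty}\frac{\mathcal{C}_{n,q}}{\mathcal{G}_{n,q}}=1,$$ where the limit is taken over even lengths $n$ for which self-dual codes over $\mathbb{F}_q$ exist. Equivalently, for $n$ large, almost all self-dual codes of length $n$ over $\mathbb{F}_q$ are indecomposable (have Gorenstein defect $0$).
   Context: Codes are counted as distinct subspaces of $\mathbb{F}_q^n$. A code $\mathcal{C}\subseteq\mathbb{F}_q^n$ is self-dual if $\mathcal{C}=\mathcal{C}^\perp$ for the standard bilinear form. Codes are equivalent if they differ by a coordinate permutation; a code is decomposable if it is equivalent to a direct sum $\{(c_1,c_2):c_i\in\mathcal{C}_i\}$ of two nontrivial (nonzero, positive-length) codes, and indecomposable otherwise. For a self-dual code $\mathcal{C}\subseteq\mathbb{F}_q^{2k}$, its Gorenstein defect is $2k-\dim(\mathcal{C}^{(2)})-1$, where $\mathcal{C}^{(2)}$ is the span of all componentwise products of pairs of codewords. *)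

theory Defs
  imports "HOL-Library.FuncSet" "HOL-Combinatorics.Permutations" Complex_Main
begin

text \<open>Vectors of length n over a field: functions nat => 'a vanishing outside {..<n}.
  The field F_q is modelled by an arbitrary finite field type 'a, q = CARD('a).\<close>

definition vecs :: "nat \<Rightarrow> (nat \<Rightarrow> 'a::field) set" where
  "vecs n = {v. \<forall>i\<ge>n. v i = 0}"

definition is_code :: "nat \<Rightarrow> (nat \<Rightarrow> 'a::field) set \<Rightarrow> bool" where
  "is_code n C \<longleftrightarrow> C \<subseteq> vecs n \<and> (\<lambda>_. 0) \<in> C \<and>
     (\<forall>x\<in>C. \<forall>y\<in>C. (\<lambda>i. x i + y i) \<in> C) \<and>
     (\<forall>a. \<forall>x\<in>C. (\<lambda>i. a * x i) \<in> C)"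

definition dot :: "nat \<Rightarrow> (nat \<Rightarrow> 'a::field) \<Rightarrow> (nat \<Rightarrow> 'a) \<Rightarrow> 'a" where
  "dot n x y = (\<Sum>i<n. x i * y i)"

definition dual_code :: "nat \<Rightarrow> (nat \<Rightarrow> 'a::field) set \<Rightarrow> (nat \<Rightarrow> 'a) set" where
  "dual_code n C = {v \<in> vecs n. \<forall>c\<in>C. dot n v c = 0}"

definition self_dual :: "nat \<Rightarrow> (nat \<Rightarrow> 'a::field) set \<Rightarrow> bool" where
  "self_dual n C \<longleftrightarrow> is_code n C \<and> C = dual_code n C"

definition perm_code :: "(nat \<Rightarrow> nat) \<Rightarrow> (nat \<Rightarrow> 'a) set \<Rightarrow> (nat \<Rightarrow> 'a) set" where
  "perm_code \<sigma> C = (\<lambda>c. c \<circ> \<sigma>) ` C"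

definition direct_sum :: "nat \<Rightarrow> (nat \<Rightarrow> 'a) set \<Rightarrow> (nat \<Rightarrow> 'a) set \<Rightarrow> (nat \<Rightarrow> 'a) set" where
  "direct_sum n1 C1 C2 =
     {(\<lambda>i. if i < n1 then c1 i else c2 (i - n1)) | c1 c2. c1 \<in> C1 \<and> c2 \<in> C2}"

definition decomposable :: "nat \<Rightarrow> (nat \<Rightarrow> 'a::field) set \<Rightarrow> bool" where
  "decomposable n C \<longleftrightarrow>
     (\<exists>\<sigma> n1 n2 C1 C2. \<sigma> permutes {..<n} \<and> 0 < n1 \<and> 0 < n2 \<and> n1 + n2 = n \<and>
        is_code n1 C1 \<and> is_code n2 C2 \<and> C1 \<noteq> {\<lambda>_. 0} \<and> C2 \<noteq> {\<lambda>_. 0} \<and>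
        perm_code \<sigma> C = direct_sum n1 C1 C2)"

definition indecomposable :: "nat \<Rightarrow> (nat \<Rightarrow> 'a::field) set \<Rightarrow> bool" where
  "indecomposable n C \<longleftrightarrow> \<not> decomposable n C"

definition num_sd :: "'a::field itself \<Rightarrow> nat \<Rightarrow> nat" where
  "num_sd _ n = card {C :: (nat \<Rightarrow> 'a) set. self_dual n C}"

definition num_indec_sd :: "'a::field itself \<Rightarrow> nat \<Rightarrow> nat" where
  "num_indec_sd _ n = card {C :: (nat \<Rightarrow> 'a) set. self_dual n C \<and> indecomposable n C}"

end

(* Write G n for the number of self-dual codes of length n over a field with q elements.  After a
   permutation of coordinates, a decomposable self-dual code is the direct sum of self-dual codes on
   a set A of coordinates with 0 < |A| < n and on its complement, so at most
   sum_k binomial n k * G k * G (n - k) codes are decomposable.  Two estimates make this o(G n).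

   From above, G (2 k) <= 4^k q^(k^2 + k), by counting subspaces of dimension k.

   From below, a self-dual code M of length m can be glued to a self-dual frame of length s
   (s = 2 using a square root of -1, s = 4 using -1 = b^2 + c^2) in many ways, and each glued code
   arises from at most |M|^(s/2) pairs of a code and gluing parameters.  This gives
   G (2 j + 2) >= q^(j - 1) G (2 j) and G (m + 4) >= q^m G m; when -1 is not a square, G n = 0
   unless 4 divides n, so the second step suffices.  Iterating,
   G (2 k2) q^(k1 k2 + k1 (k1 - 1) / 2) <= G (2 (k1 + k2)) q^k1 whenever G (2 k1) > 0.  Together
   with the upper bound, the term for |A| = 2 k1 <= n / 2 is at most G n y^k1 with
   y = O(n^2 q^(3 - n/8)), and the terms for odd |A| vanish. *)

theory Submission
  imports Defs "HOL-Library.Cardinality" "HOL-Real_Asymp.Real_Asymp"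
begin

section \<open>Vectors and the standard bilinear form\<close>

lemma vecsD: "v \<in> vecs n \<Longrightarrow> n \<le> i \<Longrightarrow> v i = 0"
  unfolding vecs_def by auto

lemma vecs_zero [simp]: "(\<lambda>_. 0) \<in> vecs n"
  unfolding vecs_def by auto

lemma vecs_0: "vecs 0 = {\<lambda>_. 0}"
  unfolding vecs_def by auto

lemma vecs_add: "a \<in> vecs n \<Longrightarrow> b \<in> vecs n \<Longrightarrow> (\<lambda>k. a k + b k) \<in> vecs n"
  unfolding vecs_def by auto

lemma vecs_diff: "a \<in> vecs n \<Longrightarrow> b \<in> vecs n \<Longrightarrow> (\<lambda>k. a k - b k) \<in> vecs n"
  unfolding vecs_def by auto

lemma vecs_scale: "a \<in> vecs n \<Longrightarrow> (\<lambda>k. c * a k) \<in> vecs n"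
  unfolding vecs_def by auto

lemma vecs_lincomb: "(\<And>i. i \<in> I \<Longrightarrow> a i \<in> vecs n) \<Longrightarrow> (\<lambda>k. \<Sum>i\<in>I. c i * a i k) \<in> vecs n"
  unfolding vecs_def by auto

lemma vecs_Suc_zero: "v \<in> vecs (Suc n) \<Longrightarrow> v n = 0 \<Longrightarrow> v \<in> vecs n"
  unfolding vecs_def by (auto simp: Suc_le_eq dest: le_neq_implies_less)

lemma upd_zero_in_vecs: "v \<in> vecs (Suc n) \<Longrightarrow> v(n := 0) \<in> vecs n"
  by (rule vecs_Suc_zero) (auto simp: vecs_def)

lemma upd_in_vecs_Suc: "v \<in> vecs n \<Longrightarrow> v(n := c) \<in> vecs (Suc n)"
  by (auto simp: vecs_def)

lemma bij_betw_vecs_Suc: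
  "bij_betw (\<lambda>(v, c). v(n := c)) (vecs n \<times> UNIV) (vecs (Suc n) :: (nat \<Rightarrow> 'a::field) set)"
proof (rule bij_betw_byWitness[where f' = "\<lambda>v. (v(n := 0), v n)"])
  show "\<forall>vc\<in>vecs n \<times> UNIV. (\<lambda>v. (v(n := 0), v n)) ((\<lambda>(v, c). v(n := c)) vc) = vc"
    by (auto simp: vecsD)
qed (auto simp: upd_zero_in_vecs upd_in_vecs_Suc)

lemma finite_vecs: "finite (vecs n :: (nat \<Rightarrow> 'a::{finite,field}) set)"
  by (induction n) (simp_all add: vecs_0 bij_betw_finite[OF bij_betw_vecs_Suc, symmetric])

lemma card_vecs: "card (vecs n :: (nat \<Rightarrow> 'a::{finite,field}) set) = CARD('a) ^ n"
  by (induction n) (simp_all add: vecs_0 bij_betw_same_card[OF bij_betw_vecs_Suc, symmetric]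
      card_cartesian_product)

lemma card_field_ge_2: "2 \<le> CARD('a::{finite,field})"
proof -
  have "card {0, 1::'a} \<le> CARD('a)"
    by (rule card_mono) auto
  then show ?thesis by simp
qed

lemma dot_commute: "dot n x y = dot n y x"
  unfolding dot_def by (simp add: mult.commute)

lemma dot_add_left: "dot n (\<lambda>i. x i + y i) z = dot n x z + dot n y z"
  unfolding dot_def by (simp add: distrib_right sum.distrib)

lemma dot_add_right: "dot n z (\<lambda>i. x i + y i) = dot n z x + dot n z y"
  unfolding dot_def by (simp add: distrib_left sum.distrib)

lemma dot_diff_left: "dot n (\<lambda>i. x i - y i) z = dot n x z - dot n y z"
  unfolding dot_def by (simp add: left_diff_distrib sum_subtractf)

lemma dot_diff_right: "dot n z (\<lambda>i. x i - y i) = dot n z x - dot n z y"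
  unfolding dot_def by (simp add: right_diff_distrib sum_subtractf)

lemma dot_scale_left: "dot n (\<lambda>i. c * x i) z = c * dot n x z"
  unfolding dot_def by (simp add: sum_distrib_left mult.assoc)

lemma dot_scale_right: "dot n z (\<lambda>i. c * x i) = c * dot n z x"
  unfolding dot_def by (simp add: sum_distrib_left mult.left_commute)

lemma dot_sum_left: "dot n (\<lambda>i. \<Sum>j\<in>J. f j i) z = (\<Sum>j\<in>J. dot n (f j) z)"
  unfolding dot_def by (simp add: sum_distrib_right sum.swap[of _ J])

lemma dot_sum_right: "dot n z (\<lambda>i. \<Sum>j\<in>J. f j i) = (\<Sum>j\<in>J. dot n z (f j))"
  unfolding dot_def by (simp add: sum_distrib_left sum.swap[of _ J])

lemma dot_lincomb_left: "dot n (\<lambda>k. \<Sum>i\<in>I. c i * a i k) y = (\<Sum>i\<in>I. c i * dot n (a i) y)"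
  by (simp only: dot_sum_left dot_scale_left)

lemma dot_lincomb_right: "dot n y (\<lambda>k. \<Sum>i\<in>I. c i * a i k) = (\<Sum>i\<in>I. c i * dot n y (a i))"
  by (simp only: dot_sum_right dot_scale_right)

lemma dot_zero_left [simp]: "dot n (\<lambda>_. 0) z = 0"
  unfolding dot_def by simp

lemma dot_zero_right [simp]: "dot n z (\<lambda>_. 0) = 0"
  unfolding dot_def by simp

lemma dot_Suc: "dot (Suc n) x y = dot n x y + x n * y n"
  unfolding dot_def by simp

lemma dot_cong: "(\<And>i. i < n \<Longrightarrow> x i = x' i) \<Longrightarrow> (\<And>i. i < n \<Longrightarrow> y i = y' i) \<Longrightarrow>
    dot n x y = dot n x' y'"
  unfolding dot_def by (rule sum.cong) auto

lemma dot_upd_left [simp]: "dot n (x(n := c)) y = dot n x y"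
  by (rule dot_cong) auto

lemma dot_upd_right [simp]: "dot n x (y(n := c)) = dot n x y"
  by (rule dot_cong) auto

lemma dot_length_add: "dot (m + s) x y = dot m x y + dot s (\<lambda>i. x (m + i)) (\<lambda>i. y (m + i))"
proof -
  have "(\<Sum>i<m + s. x i * y i) = (\<Sum>i<m. x i * y i) + (\<Sum>i\<in>{m..<m + s}. x i * y i)"
    by (metis lessThan_atLeast0 sum.atLeastLessThan_concat zero_le le_add1)
  also have "(\<Sum>i\<in>{m..<m + s}. x i * y i) = (\<Sum>i<s. x (m + i) * y (m + i))"
    using sum.shift_bounds_nat_ivl[of "\<lambda>i. x i * y i" 0 m s]
    by (simp add: lessThan_atLeast0 add.commute)
  finally show ?thesis unfolding dot_def .
qed

lemma sum_times_delta:
  "i < (t::nat) \<Longrightarrow> (\<Sum>j<t. c j * (if j = i then 1 else (0::'a::semiring_1))) = c i"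
proof -
  assume "i < t"
  have "(\<Sum>j<t. c j * (if j = i then 1 else 0)) = (\<Sum>j<t. if j = i then c j else 0)"
    by (rule sum.cong) auto
  then show ?thesis using \<open>i < t\<close> by simp
qed


section \<open>Codes and their duals\<close>

lemma is_codeD:
  assumes "is_code n C"
  shows "C \<subseteq> vecs n" "(\<lambda>_. 0) \<in> C" "\<And>x y. x \<in> C \<Longrightarrow> y \<in> C \<Longrightarrow> (\<lambda>i. x i + y i) \<in> C"
    "\<And>a x. x \<in> C \<Longrightarrow> (\<lambda>i. a * x i) \<in> C"
  using assms unfolding is_code_def by auto

lemma code_lincomb: "is_code n C \<Longrightarrow> x \<in> C \<Longrightarrow> y \<in> C \<Longrightarrow> (\<lambda>i. a * x i + b * y i) \<in> C"
  by (simp add: is_codeD)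

lemma code_diff: "is_code n C \<Longrightarrow> x \<in> C \<Longrightarrow> y \<in> C \<Longrightarrow> (\<lambda>i. x i - y i) \<in> C"
  using code_lincomb[of n C x y 1 "- 1"] by simp

lemma is_code_image:
  assumes C: "is_code n C" and f: "f ` C \<subseteq> vecs k"
    and add: "\<And>x y. x \<in> C \<Longrightarrow> y \<in> C \<Longrightarrow> f (\<lambda>i. x i + y i) = (\<lambda>i. f x i + f y i)"
    and scale: "\<And>a x. x \<in> C \<Longrightarrow> f (\<lambda>i. a * x i) = (\<lambda>i. a * f x i)"
  shows "is_code k (f ` C)"
  unfolding is_code_def
proof (intro conjI ballI allI f)
  have "f (\<lambda>_. 0) = (\<lambda>_. 0)"
    using scale[of "\<lambda>_. 0" 0] is_codeD(2)[OF C] by simp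
  then show "(\<lambda>_. 0) \<in> f ` C"
    using image_eqI is_codeD(2)[OF C] by metis
next
  fix x y assume "x \<in> f ` C" "y \<in> f ` C"
  then obtain x' y' where "x' \<in> C" "y' \<in> C" "x = f x'" "y = f y'" by blast
  then show "(\<lambda>i. x i + y i) \<in> f ` C"
    using add[of x' y'] by (intro image_eqI[where x = "\<lambda>i. x' i + y' i"] is_codeD(3)[OF C]) simp_all
next
  fix a x assume "x \<in> f ` C"
  then obtain x' where "x' \<in> C" "x = f x'" by blast
  then show "(\<lambda>i. a * x i) \<in> f ` C"
    using scale[of x' a] by (intro image_eqI[where x = "\<lambda>i. a * x' i"] is_codeD(4)[OF C]) simp_all
qed

lemma is_code_finite: "is_code n (C :: (nat \<Rightarrow> 'a::{finite,field}) set) \<Longrightarrow> finite C"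
  using finite_subset[OF is_codeD(1) finite_vecs] .

lemma finite_codes: "finite {C :: (nat \<Rightarrow> 'a::{finite,field}) set. is_code n C}"
  by (rule finite_subset[of _ "Pow (vecs n)"]) (auto dest: is_codeD(1) simp: finite_vecs)

lemma finite_self_dual_codes: "finite {C :: (nat \<Rightarrow> 'a::{finite,field}) set. self_dual n C}"
  by (rule finite_subset[OF _ finite_codes]) (auto simp: self_dual_def)

lemma is_code_dual_code: "is_code n (dual_code n C)"
  unfolding is_code_def dual_code_def
  by (auto simp: dot_add_left dot_scale_left vecs_add vecs_scale)

lemma is_code_shorten: "is_code (Suc n) C \<Longrightarrow> is_code n {c \<in> C. c n = 0}"
  unfolding is_code_def using vecs_Suc_zero by auto

lemma self_dual_orth: "self_dual n C \<Longrightarrow> x \<in> C \<Longrightarrow> y \<in> C \<Longrightarrow> dot n x y = 0"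
  unfolding self_dual_def dual_code_def by blast

lemma self_dualI:
  assumes "is_code n C" and "\<And>x y. x \<in> C \<Longrightarrow> y \<in> C \<Longrightarrow> dot n x y = 0"
    and "dual_code n C \<subseteq> C"
  shows "self_dual n C"
  using assms is_codeD(1)[OF assms(1)] unfolding self_dual_def dual_code_def by auto

lemma code_pivot_bij:
  assumes C: "is_code (Suc n) C" and z: "z \<in> C" "z n = 1"
  shows "bij_betw (\<lambda>(c, a). \<lambda>i. c i + a * z i) ({c \<in> C. c n = 0} \<times> UNIV) C"
proof -
  have add: "(\<lambda>i. c i + a * z i) \<in> C" if "c \<in> C" for c a
    using code_lincomb[OF C that z(1), of 1 a] by simp
  show ?thesis
  proof (rule bij_betw_byWitness[where f' = "\<lambda>c. (\<lambda>i. c i - c n * z i, c n)"])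
    show "(\<lambda>c. (\<lambda>i. c i - c n * z i, c n)) ` C \<subseteq> {c \<in> C. c n = 0} \<times> UNIV"
      using add[of _ "- _ n"] z(2) by auto
  qed (use z add in auto)
qed

lemma card_code_pivot:
  fixes C :: "(nat \<Rightarrow> 'a::{finite,field}) set"
  assumes "is_code (Suc n) C" "z \<in> C" "z n = 1"
  shows "card C = CARD('a) * card {c \<in> C. c n = 0}"
  using bij_betw_same_card[OF code_pivot_bij[OF assms]] by (simp add: card_cartesian_product mult.commute)

lemma card_pivots:
  assumes C: "is_code (Suc n) C" and z: "z \<in> C" "z n = 1"
  shows "card {y \<in> C. y n = 1} = card {c \<in> C. c n = 0}"
proof -
  have "bij_betw (\<lambda>c i. z i + c i) {c \<in> C. c n = 0} {y \<in> C. y n = 1}"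
  proof (rule bij_betw_byWitness[where f' = "\<lambda>y i. y i - z i"])
    show "(\<lambda>c i. z i + c i) ` {c \<in> C. c n = 0} \<subseteq> {y \<in> C. y n = 1}"
      using z is_codeD(3)[OF C z(1)] by auto
    show "(\<lambda>y i. y i - z i) ` {y \<in> C. y n = 1} \<subseteq> {c \<in> C. c n = 0}"
      using z code_diff[OF C _ z(1)] by auto
  qed auto
  then show ?thesis by (rule bij_betw_same_card[symmetric])
qed

lemma card_dual_code_pivot:
  assumes C: "is_code (Suc n) C" and z: "z \<in> C" "z n = 1"
  shows "card (dual_code (Suc n) C) = card (dual_code n {c \<in> C. c n = 0})"
proof -
  have shorten: "(\<lambda>i. c i - c n * z i) \<in> {c \<in> C. c n = 0}" if "c \<in> C" for c
    using code_lincomb[OF C that z(1), of 1 "- c n"] z(2) by simp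
  have "bij_betw (\<lambda>w. w(n := - dot n w z)) (dual_code n {c \<in> C. c n = 0}) (dual_code (Suc n) C)"
  proof (rule bij_betw_byWitness[where f' = "\<lambda>v. v(n := 0)"])
    show "\<forall>w\<in>dual_code n {c \<in> C. c n = 0}. (w(n := - dot n w z))(n := 0) = w"
      by (auto simp: dual_code_def vecsD)
    show "\<forall>v\<in>dual_code (Suc n) C. (v(n := 0))(n := - dot n (v(n := 0)) z) = v"
    proof
      fix v assume "v \<in> dual_code (Suc n) C"
      then have "dot (Suc n) v z = 0" using z unfolding dual_code_def by auto
      then have "v n = - dot n v z"
        using z(2) by (simp add: dot_Suc eq_neg_iff_add_eq_0 add.commute)
      then show "(v(n := 0))(n := - dot n (v(n := 0)) z) = v" by auto
    qed
    show "(\<lambda>w. w(n := - dot n w z)) ` dual_code n {c \<in> C. c n = 0} \<subseteq> dual_code (Suc n) C"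
    proof clarify
      fix w assume w: "w \<in> dual_code n {c \<in> C. c n = 0}"
      have "dot n w c = c n * dot n w z" if "c \<in> C" for c
        using w shorten[OF that] by (auto simp: dual_code_def dot_commute dot_diff_right dot_scale_right)
      then show "w(n := - dot n w z) \<in> dual_code (Suc n) C"
        using w by (auto simp: dual_code_def dot_Suc upd_in_vecs_Suc mult.commute)
    qed
    show "(\<lambda>v. v(n := 0)) ` dual_code (Suc n) C \<subseteq> dual_code n {c \<in> C. c n = 0}"
      by (auto simp: dual_code_def upd_zero_in_vecs dot_Suc)
  qed
  then show ?thesis by (rule bij_betw_same_card[symmetric])
qed

lemma card_dual_code_no_pivot:
  fixes C :: "(nat \<Rightarrow> 'a::{finite,field}) set"
  assumes "\<forall>c\<in>C. c n = 0"
  shows "card (dual_code (Suc n) C) = CARD('a) * card (dual_code n C)"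
proof -
  have "bij_betw (\<lambda>(w, a). w(n := a)) (dual_code n C \<times> UNIV) (dual_code (Suc n) C)"
  proof (rule bij_betw_byWitness[where f' = "\<lambda>v. (v(n := 0), v n)"])
    show "\<forall>wa\<in>dual_code n C \<times> UNIV. (\<lambda>v. (v(n := 0), v n)) ((\<lambda>(w, a). w(n := a)) wa) = wa"
      by (auto simp: dual_code_def vecsD)
    show "(\<lambda>(w, a). w(n := a)) ` (dual_code n C \<times> UNIV) \<subseteq> dual_code (Suc n) C"
      using assms by (auto simp: dual_code_def dot_Suc upd_in_vecs_Suc)
    show "(\<lambda>v. (v(n := 0), v n)) ` dual_code (Suc n) C \<subseteq> dual_code n C \<times> UNIV"
      using assms by (fastforce simp: dual_code_def dot_Suc upd_zero_in_vecs)
  qed auto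
  then show ?thesis
    by (simp add: bij_betw_same_card[symmetric] card_cartesian_product mult.commute)
qed

lemma card_code_and_dual_code:
  fixes C :: "(nat \<Rightarrow> 'a::{finite,field}) set"
  assumes "is_code n C"
  shows "\<exists>d\<le>n. card C = CARD('a) ^ d \<and> card (dual_code n C) = CARD('a) ^ (n - d)"
  using assms
proof (induction n arbitrary: C)
  case 0
  then have "C = {\<lambda>_. 0}" using is_codeD[OF 0] vecs_0 by auto
  moreover have "dual_code 0 C = {\<lambda>_. 0}" unfolding dual_code_def vecs_0 by auto
  ultimately show ?case by simp
next
  case (Suc n)
  define C0 where "C0 = {c \<in> C. c n = 0}"
  obtain d where d: "d \<le> n" "card C0 = CARD('a) ^ d" "card (dual_code n C0) = CARD('a) ^ (n - d)"
    using Suc.IH[OF is_code_shorten[OF Suc.prems]] unfolding C0_def by blast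
  show ?case
  proof (cases "\<exists>z\<in>C. z n \<noteq> 0")
    case True
    then obtain z0 where z0: "z0 \<in> C" "z0 n \<noteq> 0" by blast
    define z where "z = (\<lambda>i. inverse (z0 n) * z0 i)"
    have z: "z \<in> C" "z n = 1" using is_codeD(4)[OF Suc.prems z0(1)] z0(2) unfolding z_def by auto
    show ?thesis
      using card_code_pivot[OF Suc.prems z] card_dual_code_pivot[OF Suc.prems z] d
      unfolding C0_def[symmetric] by (intro exI[of _ "Suc d"]) auto
  next
    case False
    then have "C0 = C" unfolding C0_def by auto
    then show ?thesis
      using card_dual_code_no_pivot[of C n] False d by (intro exI[of _ d]) (auto simp: Suc_diff_le)
  qed
qed

lemma self_dual_even_card:
  fixes C :: "(nat \<Rightarrow> 'a::{finite,field}) set"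
  assumes "self_dual n C"
  shows "even n" and "card C = CARD('a) ^ (n div 2)"
proof -
  obtain d where d: "d \<le> n" "card C = CARD('a) ^ d" "card (dual_code n C) = CARD('a) ^ (n - d)"
    using card_code_and_dual_code assms unfolding self_dual_def by blast
  then have "d = n - d"
    using assms card_field_ge_2[where 'a='a] unfolding self_dual_def by (simp add: power_inject_exp)
  then have "n = 2 * d" using d(1) by simp
  then show "even n" "card C = CARD('a) ^ (n div 2)" using d(2) by simp_all
qed

lemma code_eq_by_pivot:
  assumes C: "is_code (Suc n) C" "z \<in> C" "z n = 1" and C': "is_code (Suc n) C'" "z \<in> C'"
    and eq: "{c \<in> C. c n = 0} = {c \<in> C'. c n = 0}"
  shows "C = C'"
proof -
  have "C = (\<lambda>(c, a) i. c i + a * z i) ` ({c \<in> C. c n = 0} \<times> UNIV)"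
    by (rule bij_betw_imp_surj_on[OF code_pivot_bij[OF C], symmetric])
  also have "\<dots> = C'"
    unfolding eq by (rule bij_betw_imp_surj_on[OF code_pivot_bij[OF C' C(3)]])
  finally show ?thesis .
qed

section \<open>Counting codes of a given dimension\<close>

definition codes_of_dim :: "nat \<Rightarrow> nat \<Rightarrow> (nat \<Rightarrow> 'a::{finite,field}) set set" where
  "codes_of_dim n d = {C. is_code n C \<and> card C = CARD('a) ^ d}"

lemma finite_codes_of_dim: "finite (codes_of_dim n d)"
  unfolding codes_of_dim_def by (rule finite_subset[OF _ finite_codes]) auto

lemma card_affine_hyperplane:
  "card {z \<in> vecs (Suc m). z m = (1::'a::{finite,field})} = CARD('a) ^ m"
proof -
  have "bij_betw (\<lambda>w. w(m := 1)) (vecs m) {z \<in> vecs (Suc m). z m = (1::'a)}"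
    by (rule bij_betw_byWitness[where f' = "\<lambda>z. z(m := 0)"])
      (auto simp: vecsD upd_zero_in_vecs upd_in_vecs_Suc)
  then show ?thesis by (simp add: bij_betw_same_card[symmetric] card_vecs)
qed

lemma codes_of_dim_pivot_shorten:
  fixes C :: "(nat \<Rightarrow> 'a::{finite,field}) set"
  assumes C: "C \<in> codes_of_dim (Suc m) (Suc e)" and z0: "z0 \<in> C" "z0 m \<noteq> 0"
  shows "{c \<in> C. c m = 0} \<in> codes_of_dim m e" and "card {z \<in> C. z m = 1} = CARD('a) ^ e"
proof -
  have Cc: "is_code (Suc m) C" and cardC: "card C = CARD('a) ^ Suc e"
    using C by (auto simp: codes_of_dim_def)
  define z where "z = (\<lambda>i. inverse (z0 m) * z0 i)"
  have z: "z \<in> C" "z m = 1" using is_codeD(4)[OF Cc z0(1)] z0(2) unfolding z_def by auto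
  have "card {c \<in> C. c m = 0} = CARD('a) ^ e"
    using cardC card_code_pivot[OF Cc z] card_field_ge_2[where 'a = 'a] by simp
  then show "{c \<in> C. c m = 0} \<in> codes_of_dim m e" "card {z \<in> C. z m = 1} = CARD('a) ^ e"
    using is_code_shorten[OF Cc] card_pivots[OF Cc z] by (simp_all add: codes_of_dim_def)
qed

text \<open>A code with a pivot at the last coordinate is determined by its shortening \<open>C\<^sub>0\<close>
  and any one of its \<open>card C\<^sub>0\<close> pivots.\<close>

lemma card_codes_of_dim_pivot:
  "card {C \<in> codes_of_dim (Suc m) (Suc e). \<exists>z\<in>C. z m \<noteq> (0::'a::{finite,field})} * CARD('a) ^ e
     \<le> card (codes_of_dim m e :: (nat \<Rightarrow> 'a) set set) * CARD('a) ^ m"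
proof -
  let ?X = "{C \<in> codes_of_dim (Suc m) (Suc e). \<exists>z\<in>C. z m \<noteq> 0} :: (nat \<Rightarrow> 'a) set set"
  let ?H = "{z \<in> vecs (Suc m). z m = (1::'a)}"
  define P where "P = Sigma ?X (\<lambda>C. {z \<in> C. z m = 1})"
  have "finite ?X" by (rule finite_subset[OF _ finite_codes_of_dim]) auto
  moreover have "finite {z \<in> C. z m = 1}" if "C \<in> ?X" for C
    using that by (intro finite_subset[OF _ is_code_finite[of "Suc m" C]]) (auto simp: codes_of_dim_def)
  moreover have pivots: "card {z \<in> C. z m = 1} = CARD('a) ^ e" if "C \<in> ?X" for C
    using that codes_of_dim_pivot_shorten(2) by blast
  ultimately have "card ?X * CARD('a) ^ e = card P"
    unfolding P_def by (subst card_SigmaI) (auto simp: pivots)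
  also have "\<dots> \<le> card ((codes_of_dim m e :: (nat \<Rightarrow> 'a) set set) \<times> ?H)"
  proof (rule card_inj_on_le)
    show "inj_on (\<lambda>(C, z). ({c \<in> C. c m = 0}, z)) P"
    proof (rule inj_onI)
      fix x y assume x: "x \<in> P" and y: "y \<in> P"
        and eq: "(\<lambda>(C, z). ({c \<in> C. c m = 0}, z)) x = (\<lambda>(C, z). ({c \<in> C. c m = 0}, z)) y"
      obtain C z C' z' where xy: "x = (C, z)" "y = (C', z')" by (cases x, cases y)
      show "x = y"
        using x y eq code_eq_by_pivot[of m C z C'] unfolding xy P_def codes_of_dim_def by auto
    qed
    have "z \<in> vecs (Suc m)" if "C \<in> ?X" "z \<in> C" for C z
      using that is_codeD(1)[of "Suc m" C] by (auto simp: codes_of_dim_def)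
    moreover have "{c \<in> C. c m = 0} \<in> codes_of_dim m e" if "C \<in> ?X" for C
      using that codes_of_dim_pivot_shorten(1) by blast
    ultimately show "(\<lambda>(C, z). ({c \<in> C. c m = 0}, z)) ` P \<subseteq> codes_of_dim m e \<times> ?H"
      unfolding P_def by auto
    show "finite (codes_of_dim m e \<times> ?H)"
      by (intro finite_cartesian_product finite_codes_of_dim) (simp add: finite_vecs)
  qed
  also have "\<dots> = card (codes_of_dim m e :: (nat \<Rightarrow> 'a) set set) * CARD('a) ^ m"
    by (simp add: card_cartesian_product card_affine_hyperplane)
  finally show ?thesis .
qed

lemma card_codes_of_dim_no_pivot:
  "card {C \<in> codes_of_dim (Suc m) d. \<forall>z\<in>C. z m = (0::'a::{finite,field})}
     \<le> card (codes_of_dim m d :: (nat \<Rightarrow> 'a) set set)"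
proof (intro card_mono finite_codes_of_dim subsetI)
  fix C :: "(nat \<Rightarrow> 'a) set" assume C: "C \<in> {C \<in> codes_of_dim (Suc m) d. \<forall>z\<in>C. z m = 0}"
  then have "{c \<in> C. c m = 0} = C" by auto
  with C is_code_shorten[of m C] show "C \<in> codes_of_dim m d" by (simp add: codes_of_dim_def)
qed

lemma card_codes_of_dim_0:
  "card (codes_of_dim 0 d :: (nat \<Rightarrow> 'a::{finite,field}) set set) \<le> (if d = 0 then 1 else 0)"
proof -
  have "C = {\<lambda>_. 0} \<and> d = 0" if C: "C \<in> (codes_of_dim 0 d :: (nat \<Rightarrow> 'a) set set)" for C
  proof
    show "C = {\<lambda>_. 0}"
      using C is_codeD(1,2)[of 0 C] by (auto simp: codes_of_dim_def vecs_0)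
    then have "CARD('a) ^ d = 1" using C by (simp add: codes_of_dim_def)
    then show "d = 0" using card_field_ge_2[where 'a = 'a] by (simp add: power_eq_1_iff)
  qed
  then have "codes_of_dim 0 d \<subseteq> (if d = 0 then {{\<lambda>_. 0 :: 'a}} else {})" by auto
  from card_mono[OF _ this] show ?thesis by (auto split: if_splits)
qed

lemma card_codes_of_dim_le:
  "card (codes_of_dim m d :: (nat \<Rightarrow> 'a::{finite,field}) set set) * CARD('a) ^ (d * d)
     \<le> 2 ^ m * CARD('a) ^ (d * m + d)"
proof (induction m arbitrary: d)
  case 0
  then show ?case using card_codes_of_dim_0[where d = d and 'a = 'a] by (cases "d = 0") auto
next
  case (Suc m)
  let ?q = "CARD('a)" and ?X = "codes_of_dim (Suc m) d :: (nat \<Rightarrow> 'a) set set"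
  let ?X1 = "{C \<in> ?X. \<forall>z\<in>C. z m = 0}" and ?X2 = "{C \<in> ?X. \<exists>z\<in>C. z m \<noteq> 0}"
  have q: "1 \<le> ?q" using card_field_ge_2[where 'a = 'a] by simp
  have "card ?X1 * ?q ^ (d * d) \<le> card (codes_of_dim m d :: (nat \<Rightarrow> 'a) set set) * ?q ^ (d * d)"
    using card_codes_of_dim_no_pivot[of m d, where 'a = 'a] by simp
  also have "\<dots> \<le> 2 ^ m * ?q ^ (d * m + d)"
    by (rule Suc.IH)
  also have "\<dots> \<le> 2 ^ m * ?q ^ (d * Suc m + d)"
    using q by (intro mult_left_mono power_increasing) auto
  finally have X1: "card ?X1 * ?q ^ (d * d) \<le> 2 ^ m * ?q ^ (d * Suc m + d)" .
  have X2: "card ?X2 * ?q ^ (d * d) \<le> 2 ^ m * ?q ^ (d * Suc m + d)"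
  proof (cases d)
    case 0
    have "C = {\<lambda>_. 0}" if "C \<in> ?X" for C
      using that 0 is_codeD(2)[of "Suc m" C] by (auto simp: codes_of_dim_def card_1_singleton_iff)
    then have "?X2 = {}" by fastforce
    then have "card ?X2 = 0" by (simp only: card.empty)
    then show ?thesis by simp
  next
    case (Suc e)
    have "card ?X2 * ?q ^ (d * d) = card ?X2 * ?q ^ e * ?q ^ (e * e + e + 1)"
      using Suc by (simp add: power_add[symmetric] algebra_simps)
    also have "\<dots> \<le> card (codes_of_dim m e :: (nat \<Rightarrow> 'a) set set) * ?q ^ m * ?q ^ (e * e + e + 1)"
      using Suc card_codes_of_dim_pivot[of m e, where 'a = 'a] by simp
    also have "\<dots> = card (codes_of_dim m e :: (nat \<Rightarrow> 'a) set set) * ?q ^ (e * e) * ?q ^ (m + e + 1)"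
      by (simp add: power_add[symmetric] algebra_simps)
    also have "\<dots> \<le> 2 ^ m * ?q ^ (e * m + e) * ?q ^ (m + e + 1)"
      using Suc.IH[of e] by simp
    also have "\<dots> = 2 ^ m * ?q ^ (e * m + e + m + e + 1)"
      by (simp add: power_add[symmetric] algebra_simps)
    also have "\<dots> \<le> 2 ^ m * ?q ^ (d * Suc m + d)"
      using Suc q by (intro mult_left_mono power_increasing) auto
    finally show ?thesis .
  qed
  have "finite ?X" by (rule finite_codes_of_dim)
  then have "card ?X = card ?X1 + card ?X2"
    by (subst card_Un_disjoint[symmetric]) (auto intro: arg_cong[where f = card])
  then have "card ?X * ?q ^ (d * d) = card ?X1 * ?q ^ (d * d) + card ?X2 * ?q ^ (d * d)"
    by (simp add: add_mult_distrib)
  with X1 X2 show ?case by simp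
qed

section \<open>Decomposable self-dual codes\<close>

definition coord_mask :: "nat set \<Rightarrow> (nat \<Rightarrow> 'a::zero) \<Rightarrow> nat \<Rightarrow> 'a" where
  "coord_mask A c = (\<lambda>i. if i \<in> A then c i else 0)"

definition reindex :: "(nat \<Rightarrow> nat) \<Rightarrow> nat \<Rightarrow> (nat \<Rightarrow> 'a::zero) \<Rightarrow> nat \<Rightarrow> 'a" where
  "reindex e k c = (\<lambda>i. if i < k then c (e i) else 0)"

lemma bij_betw_sorted_list_of_set:
  "finite A \<Longrightarrow> bij_betw ((!) (sorted_list_of_set A)) {..<card A} A"
  by (rule bij_betw_nth) simp_all

lemma coord_mask_compl:
  assumes "c \<in> vecs n"
  shows "coord_mask ({..<n} - A) c = (\<lambda>i. c i - coord_mask A c i)"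
  using assms by (auto simp: coord_mask_def vecsD)

lemma code_coord_mask_compl:
  assumes C: "is_code n C" and closed: "\<And>c. c \<in> C \<Longrightarrow> coord_mask A c \<in> C" and c: "c \<in> C"
  shows "coord_mask ({..<n} - A) c \<in> C"
proof -
  have "c \<in> vecs n" using is_codeD(1)[OF C] c by auto
  then show ?thesis using code_diff[OF C c closed[OF c]] by (simp add: coord_mask_compl)
qed

lemma dot_coord_mask:
  assumes "A \<subseteq> {..<n}"
  shows "dot n (coord_mask A c) (coord_mask A c') = (\<Sum>j\<in>A. c j * c' j)"
proof -
  have "dot n (coord_mask A c) (coord_mask A c') = (\<Sum>j<n. if j \<in> A then c j * c' j else 0)"
    unfolding dot_def coord_mask_def by (rule sum.cong) auto
  also have "\<dots> = (\<Sum>j\<in>A. c j * c' j)"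
    using assms by (simp add: sum.inter_restrict[symmetric] Int_absorb1)
  finally show ?thesis .
qed

lemma dot_reindex:
  assumes "bij_betw e {..<k} A"
  shows "dot k (reindex e k c) (reindex e k c') = (\<Sum>j\<in>A. c j * c' j)"
  unfolding dot_def reindex_def using sum.reindex_bij_betw[OF assms] by simp

lemma reindex_eq_on:
  assumes "bij_betw e {..<k} A" "reindex e k c = reindex e k c'" "j \<in> A"
  shows "c j = c' j"
proof -
  obtain i where "i < k" "e i = j" using assms(1,3) unfolding bij_betw_def by auto
  then show ?thesis using fun_cong[OF assms(2), of i] unfolding reindex_def by simp
qed

lemma self_dual_reindex:
  fixes C :: "(nat \<Rightarrow> 'a::field) set"
  assumes C: "self_dual n C" and A: "A \<subseteq> {..<n}" and e: "bij_betw e {..<k} A"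
    and closed: "\<And>c. c \<in> C \<Longrightarrow> coord_mask A c \<in> C"
  shows "self_dual k (reindex e k ` C)"
proof (rule self_dualI)
  have Cc: "is_code n C" using C unfolding self_dual_def by simp
  show "is_code k (reindex e k ` C)"
    by (rule is_code_image[OF Cc]) (auto simp: reindex_def vecs_def)
  show "dot k x y = 0" if "x \<in> reindex e k ` C" "y \<in> reindex e k ` C" for x y
    using that self_dual_orth[OF C closed closed] by (auto simp: dot_reindex[OF e] dot_coord_mask[OF A])
  show "dual_code k (reindex e k ` C) \<subseteq> reindex e k ` C"
  proof
    fix x assume x: "x \<in> dual_code k (reindex e k ` C)"
    define e' where "e' = inv_into {..<k} e"
    have e': "\<And>i. i < k \<Longrightarrow> e' (e i) = i" "\<And>j. j \<in> A \<Longrightarrow> e' j < k"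
      unfolding e'_def using e by (auto simp: bij_betw_def inv_into_into)
    define X where "X = (\<lambda>j. if j \<in> A then x (e' j) else 0)"
    have "dot n X c = dot k x (reindex e k c)" for c
    proof -
      have "dot n X c = (\<Sum>j<n. if j \<in> A then x (e' j) * c j else 0)"
        unfolding dot_def X_def by (rule sum.cong) auto
      also have "\<dots> = (\<Sum>j\<in>A. x (e' j) * c j)"
        using A by (simp add: sum.inter_restrict[symmetric] Int_absorb1)
      also have "\<dots> = (\<Sum>i<k. x i * c (e i))"
        using sum.reindex_bij_betw[OF e, of "\<lambda>j. x (e' j) * c j"] e'(1) by simp
      finally show ?thesis unfolding dot_def reindex_def by simp
    qed
    then have "X \<in> dual_code n C"
      using x A unfolding dual_code_def X_def vecs_def by auto
    then have "X \<in> C" using C unfolding self_dual_def by simp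
    moreover have "reindex e k X = x"
    proof
      fix i show "reindex e k X i = x i"
      proof (cases "i < k")
        case True
        then have "e i \<in> A" using e by (auto simp: bij_betw_def)
        then show ?thesis using True e' unfolding reindex_def X_def by simp
      next
        case False
        then show ?thesis using x vecsD[of x k i] unfolding reindex_def dual_code_def by simp
      qed
    qed
    ultimately show "x \<in> reindex e k ` C" by blast
  qed
qed

lemma code_eq_reindex_pair:
  fixes C :: "(nat \<Rightarrow> 'a::field) set"
  assumes C: "is_code n C" and A: "A \<subseteq> {..<n}" and e: "bij_betw e {..<k} A"
    and e': "bij_betw e' {..<k'} ({..<n} - A)"
    and closed: "\<And>c. c \<in> C \<Longrightarrow> coord_mask A c \<in> C"
  shows "C = {c \<in> vecs n. reindex e k c \<in> reindex e k ` C \<and> reindex e' k' c \<in> reindex e' k' ` C}"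
proof safe
  fix c assume "c \<in> C" then show "c \<in> vecs n" using is_codeD(1)[OF C] by auto
next
  fix c c' c'' assume c: "c \<in> vecs n" and c': "c' \<in> C" and c'': "c'' \<in> C"
    and eq: "reindex e k c = reindex e k c'" and eq': "reindex e' k' c = reindex e' k' c''"
  have "coord_mask ({..<n} - A) c'' \<in> C"
    by (rule code_coord_mask_compl[OF C closed c''])
  moreover have "c = (\<lambda>i. coord_mask A c' i + coord_mask ({..<n} - A) c'' i)"
    using reindex_eq_on[OF e eq] reindex_eq_on[OF e' eq'] c
    by (auto simp: fun_eq_iff coord_mask_def vecsD)
  ultimately show "c \<in> C" using is_codeD(3)[OF C closed[OF c']] by simp
qed auto

lemma decomposable_imp_mask_closed:
  fixes C :: "(nat \<Rightarrow> 'a::field) set"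
  assumes "decomposable n C"
  obtains A where "A \<subseteq> {..<n}" "0 < card A" "card A < n" "\<And>c. c \<in> C \<Longrightarrow> coord_mask A c \<in> C"
proof -
  obtain \<sigma> n1 n2 and C1 C2 :: "(nat \<Rightarrow> 'a) set" where
    \<sigma>: "\<sigma> permutes {..<n}" and n: "0 < n1" "0 < n2" "n1 + n2 = n"
    and C2: "is_code n2 C2" and P: "perm_code \<sigma> C = direct_sum n1 C1 C2"
    using assms unfolding decomposable_def by blast
  define A where "A = \<sigma> ` {..<n1}"
  have A_iff: "\<sigma> i \<in> A \<longleftrightarrow> i < n1" for i
    unfolding A_def using permutes_inj[OF \<sigma>] by (auto simp: inj_eq)
  have "A \<subseteq> {..<n}"
    unfolding A_def using permutes_in_image[OF \<sigma>, of "_ :: nat"] n by fastforce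
  moreover have "card A = n1"
    unfolding A_def using permutes_inj[OF \<sigma>] by (simp add: card_image inj_on_subset)
  moreover have "coord_mask A c \<in> C" if c: "c \<in> C" for c
  proof -
    have "c \<circ> \<sigma> \<in> direct_sum n1 C1 C2" using P c unfolding perm_code_def by auto
    then obtain c1 c2 where c12: "c1 \<in> C1" "c \<circ> \<sigma> = (\<lambda>i. if i < n1 then c1 i else c2 (i - n1))"
      unfolding direct_sum_def by auto
    have "coord_mask A c \<circ> \<sigma> = (\<lambda>i. if i < n1 then c1 i else (\<lambda>_. 0) (i - n1))"
    proof
      fix i show "(coord_mask A c \<circ> \<sigma>) i = (if i < n1 then c1 i else (\<lambda>_. 0) (i - n1))"
        using fun_cong[OF c12(2), of i] A_iff[of i] unfolding coord_mask_def by auto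
    qed
    also have "\<dots> \<in> perm_code \<sigma> C"
      unfolding P direct_sum_def mem_Collect_eq
      by (rule exI[of _ c1], rule exI[of _ "\<lambda>_. 0"]) (simp add: c12(1) is_codeD(2)[OF C2])
    finally obtain c' where c': "c' \<in> C" "coord_mask A c \<circ> \<sigma> = c' \<circ> \<sigma>"
      unfolding perm_code_def by auto
    have "coord_mask A c = c'"
    proof
      fix j
      obtain i where "\<sigma> i = j" using permutes_surj[OF \<sigma>] by (metis surjD)
      then show "coord_mask A c j = c' j" using fun_cong[OF c'(2), of i] by simp
    qed
    then show ?thesis using c'(1) by simp
  qed
  ultimately show ?thesis using n that by simp
qed

lemma sum_subsets_by_card:
  fixes f :: "nat \<Rightarrow> 'b::comm_semiring_1"
  shows "(\<Sum>A | A \<subseteq> {..<n} \<and> 0 < card A \<and> card A < n. f (card A)) = (\<Sum>k\<in>{1..<n}. of_nat (n choose k) * f k)"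
proof -
  let ?S = "{A. A \<subseteq> {..<n} \<and> 0 < card A \<and> card A < n}"
  have "finite ?S" by (rule finite_subset[of _ "Pow {..<n}"]) auto
  then have "(\<Sum>A\<in>?S. f (card A)) = (\<Sum>k\<in>{1..<n}. \<Sum>A\<in>{A \<in> ?S. card A = k}. f (card A))"
    by (rule sum.group[symmetric]) auto
  also have "\<dots> = (\<Sum>k\<in>{1..<n}. of_nat (n choose k) * f k)"
  proof (rule sum.cong[OF refl])
    fix k assume "k \<in> {1..<n}"
    then have "{A \<in> ?S. card A = k} = {A. A \<subseteq> {..<n} \<and> card A = k}" by auto
    then show "(\<Sum>A\<in>{A \<in> ?S. card A = k}. f (card A)) = of_nat (n choose k) * f k"
      using n_subsets[of "{..<n}" k] by simp
  qed
  finally show ?thesis .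
qed

definition merge_codes :: "nat \<Rightarrow> nat set \<Rightarrow> (nat \<Rightarrow> 'a::field) set \<times> (nat \<Rightarrow> 'a) set \<Rightarrow> (nat \<Rightarrow> 'a) set"
  where "merge_codes n A = (\<lambda>(C1, C2). {c \<in> vecs n.
    reindex ((!) (sorted_list_of_set A)) (card A) c \<in> C1 \<and>
    reindex ((!) (sorted_list_of_set ({..<n} - A))) (n - card A) c \<in> C2})"

lemma decomposable_self_dual_merge:
  fixes C :: "(nat \<Rightarrow> 'a::field) set"
  assumes C: "self_dual n C" and dec: "decomposable n C"
  obtains A where "A \<subseteq> {..<n}" "0 < card A" "card A < n"
    "C \<in> merge_codes n A ` ({C1. self_dual (card A) C1} \<times> {C2. self_dual (n - card A) C2})"
proof -
  obtain A where A: "A \<subseteq> {..<n}" "0 < card A" "card A < n"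
    and closed: "\<And>c. c \<in> C \<Longrightarrow> coord_mask A c \<in> C"
    using decomposable_imp_mask_closed[OF dec] by blast
  let ?e = "(!) (sorted_list_of_set A)" and ?e' = "(!) (sorted_list_of_set ({..<n} - A))"
  have Cc: "is_code n C" using C unfolding self_dual_def by simp
  have fin: "finite A" using A(1) finite_subset by blast
  have e: "bij_betw ?e {..<card A} A"
    by (rule bij_betw_sorted_list_of_set[OF fin])
  have e': "bij_betw ?e' {..<n - card A} ({..<n} - A)"
    using bij_betw_sorted_list_of_set[of "{..<n} - A"] A(1) fin by (simp add: card_Diff_subset)
  have "C = merge_codes n A (reindex ?e (card A) ` C, reindex ?e' (n - card A) ` C)"
    unfolding merge_codes_def using code_eq_reindex_pair[OF Cc A(1) e e' closed] by simp
  moreover have "self_dual (card A) (reindex ?e (card A) ` C)"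
    by (rule self_dual_reindex[OF C A(1) e closed])
  moreover have "self_dual (n - card A) (reindex ?e' (n - card A) ` C)"
    using self_dual_reindex[OF C _ e' code_coord_mask_compl[OF Cc closed]] by simp
  ultimately show ?thesis using that A by blast
qed

lemma card_decomposable_self_dual_le:
  "card {C :: (nat \<Rightarrow> 'a::{finite,field}) set. self_dual n C \<and> decomposable n C}
    \<le> (\<Sum>k\<in>{1..<n}. (n choose k) * (num_sd TYPE('a) k * num_sd TYPE('a) (n - k)))"
proof -
  let ?SD = "\<lambda>k. {C :: (nat \<Rightarrow> 'a) set. self_dual k C}"
  let ?S = "{A. A \<subseteq> {..<n} \<and> 0 < card A \<and> card A < n}"
  let ?M = "\<lambda>A. merge_codes n A ` (?SD (card A) \<times> ?SD (n - card A))"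
  have fin_S: "finite ?S" by (rule finite_subset[of _ "Pow {..<n}"]) auto
  have "{C. self_dual n C \<and> decomposable n C} \<subseteq> (\<Union>A\<in>?S. ?M A)"
  proof
    fix C :: "(nat \<Rightarrow> 'a) set" assume "C \<in> {C. self_dual n C \<and> decomposable n C}"
    then have "self_dual n C" "decomposable n C" by simp_all
    then obtain A where "A \<subseteq> {..<n}" "0 < card A" "card A < n" "C \<in> ?M A"
      by (rule decomposable_self_dual_merge)
    then show "C \<in> (\<Union>A\<in>?S. ?M A)" by blast
  qed
  then have "card {C :: (nat \<Rightarrow> 'a) set. self_dual n C \<and> decomposable n C} \<le> card (\<Union>A\<in>?S. ?M A)"
    by (rule card_mono[rotated]) (use fin_S finite_self_dual_codes in blast)
  also have "\<dots> \<le> (\<Sum>A\<in>?S. card (?M A))"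
    by (rule card_UN_le[OF fin_S])
  also have "\<dots> \<le> (\<Sum>A\<in>?S. num_sd TYPE('a) (card A) * num_sd TYPE('a) (n - card A))"
    by (intro sum_mono order_trans[OF card_image_le])
      (simp_all add: finite_self_dual_codes card_cartesian_product num_sd_def)
  also have "\<dots> = (\<Sum>k\<in>{1..<n}. (n choose k) * (num_sd TYPE('a) k * num_sd TYPE('a) (n - k)))"
    using sum_subsets_by_card[where n = n and f = "\<lambda>k. num_sd TYPE('a) k * num_sd TYPE('a) (n - k)"]
    by simp
  finally show ?thesis .
qed

section \<open>Gluing a self-dual code to a self-dual frame\<close>

definition vec_append :: "nat \<Rightarrow> (nat \<Rightarrow> 'a) \<Rightarrow> (nat \<Rightarrow> 'a) \<Rightarrow> nat \<Rightarrow> 'a" where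
  "vec_append m a b = (\<lambda>k. if k < m then a k else b (k - m))"

lemma vec_append_in_vecs: "a \<in> vecs m \<Longrightarrow> b \<in> vecs s \<Longrightarrow> vec_append m a b \<in> vecs (m + s)"
  unfolding vec_append_def vecs_def by auto

lemma dot_vec_append: "dot (m + s) (vec_append m a b) (vec_append m a' b') = dot m a a' + dot s b b'"
proof -
  have "dot m (vec_append m a b) (vec_append m a' b') = dot m a a'"
    by (rule dot_cong) (auto simp: vec_append_def)
  then show ?thesis by (simp add: dot_length_add vec_append_def)
qed

lemma vec_append_add:
  "(\<lambda>k. vec_append m a b k + vec_append m a' b' k) = vec_append m (\<lambda>k. a k + a' k) (\<lambda>k. b k + b' k)"
  by (auto simp: vec_append_def)

lemma vec_append_diff:
  "(\<lambda>k. vec_append m a b k - vec_append m a' b' k) = vec_append m (\<lambda>k. a k - a' k) (\<lambda>k. b k - b' k)"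
  by (auto simp: vec_append_def)

lemma vec_append_scale: "(\<lambda>k. c * vec_append m a b k) = vec_append m (\<lambda>k. c * a k) (\<lambda>k. c * b k)"
  by (auto simp: vec_append_def)

lemma vec_append_zero: "vec_append m (\<lambda>_. 0) (\<lambda>_. 0) = (\<lambda>_. 0)"
  by (auto simp: vec_append_def)

lemma vec_append_inj:
  assumes "a \<in> vecs m" "a' \<in> vecs m" "vec_append m a b = vec_append m a' b'"
  shows "a = a'" "b = b'"
proof -
  show "a = a'"
  proof
    fix k show "a k = a' k"
      using fun_cong[OF assms(3), of k] assms(1,2) by (cases "k < m") (simp_all add: vec_append_def vecsD)
  qed
  show "b = b'"
  proof
    fix k show "b k = b' k" using fun_cong[OF assms(3), of "m + k"] by (simp add: vec_append_def)
  qed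
qed

lemma vec_append_split:
  assumes "v \<in> vecs (m + s)"
  obtains a b where "v = vec_append m a b" "a \<in> vecs m" "b \<in> vecs s"
proof
  show "v = vec_append m (\<lambda>k. if k < m then v k else 0) (\<lambda>i. v (m + i))"
    "(\<lambda>k. if k < m then v k else 0) \<in> vecs m" "(\<lambda>i. v (m + i)) \<in> vecs s"
    using assms unfolding vec_append_def vecs_def by auto
qed

text \<open>The part of the dual in the hyperplane \<open>y t = 0\<close> is the dual of the truncated code, which is
  smaller by a factor \<open>q\<close>.\<close>

lemma dual_code_last_nonzero:
  fixes C :: "(nat \<Rightarrow> 'a::{finite,field}) set"
  assumes C: "is_code (Suc t) C" and inj: "inj_on (\<lambda>y. y(t := 0)) C"
  shows "\<exists>y\<in>dual_code (Suc t) C. y t \<noteq> 0"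
proof -
  let ?V = "(\<lambda>y. y(t := 0)) ` C"
  have "is_code t ?V"
    by (rule is_code_image[OF C]) (use is_codeD(1)[OF C] in \<open>auto simp: upd_zero_in_vecs\<close>)
  then obtain d where d: "d \<le> t" "card ?V = CARD('a) ^ d" "card (dual_code t ?V) = CARD('a) ^ (t - d)"
    using card_code_and_dual_code by blast
  obtain d' where d': "card C = CARD('a) ^ d'" "card (dual_code (Suc t) C) = CARD('a) ^ (Suc t - d')"
    using card_code_and_dual_code[OF C] by blast
  have "d' = d"
    using d(2) d'(1) card_image[OF inj] card_field_ge_2[where 'a = 'a] by (simp add: power_inject_exp)
  have "{y \<in> dual_code (Suc t) C. y t = 0} \<subseteq> dual_code t ?V"
    by (auto simp: dual_code_def vecs_Suc_zero dot_Suc)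
  moreover have "card (dual_code t ?V) < card (dual_code (Suc t) C)"
    using d d' \<open>d' = d\<close> card_field_ge_2[where 'a = 'a] by (simp add: Suc_diff_le)
  ultimately show ?thesis
    using card_mono[OF is_code_finite[OF is_code_dual_code[of t ?V]], of "dual_code (Suc t) C"]
    by (auto simp: subset_iff)
qed

text \<open>The coefficients come from a vector with nonzero last coordinate in the dual of the image of \<open>L\<close>
  under \<open>x \<mapsto> (\<langle>x, P 0\<rangle>, \<dots>, \<langle>x, P (t - 1)\<rangle>, \<langle>x, p\<rangle>)\<close>.\<close>

lemma dot_lincomb_of_kernel:
  fixes L :: "(nat \<Rightarrow> 'a::{finite,field}) set" and t :: nat
  assumes L: "is_code N L" and ker: "\<And>x. x \<in> L \<Longrightarrow> (\<forall>j<t. dot N x (P j) = 0) \<Longrightarrow> dot N x p = 0"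
  shows "\<exists>\<beta>. \<forall>x\<in>L. dot N x p = (\<Sum>j<t. \<beta> j * dot N x (P j))"
proof -
  define G where "G x = (\<lambda>j. if j < t then dot N x (P j) else if j = t then dot N x p else 0)" for x
  have "is_code (Suc t) (G ` L)"
    by (rule is_code_image[OF L]) (auto simp: G_def vecs_def dot_add_left dot_scale_left)
  moreover have "inj_on (\<lambda>y. y(t := 0)) (G ` L)"
  proof (rule inj_onI, clarify)
    fix x x' assume x: "x \<in> L" "x' \<in> L" and eq: "(G x)(t := 0) = (G x')(t := 0)"
    have P_eq: "dot N x (P j) = dot N x' (P j)" if "j < t" for j
      using fun_cong[OF eq, of j] that by (simp add: G_def)
    then have "dot N x p = dot N x' p"
      using ker[OF code_diff[OF L x]] by (simp add: dot_diff_left)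
    then show "G x = G x'"
      using P_eq by (auto simp: G_def fun_eq_iff)
  qed
  ultimately obtain y where y: "y \<in> dual_code (Suc t) (G ` L)" "y t \<noteq> 0"
    using dual_code_last_nonzero by blast
  show ?thesis
  proof (intro exI ballI)
    fix x assume "x \<in> L"
    then have "dot (Suc t) y (G x) = 0"
      using y(1) by (auto simp: dual_code_def)
    then have "y t * dot N x p = - (\<Sum>j<t. y j * dot N x (P j))"
      by (simp add: dot_Suc dot_def G_def add_eq_0_iff)
    moreover have "(\<Sum>j<t. - y j / y t * dot N x (P j)) = - (\<Sum>j<t. y j * dot N x (P j)) / y t"
      by (simp add: sum_divide_distrib sum_negf)
    moreover have "dot N x p = y t * dot N x p / y t"
      using y(2) by simp
    ultimately show "dot N x p = (\<Sum>j<t. - y j / y t * dot N x (P j))"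
      by simp
  qed
qed

lemma card_le_mult_card_image:
  assumes "finite A" and "\<And>y. y \<in> f ` A \<Longrightarrow> card {x \<in> A. f x = y} \<le> K"
  shows "card A \<le> K * card (f ` A)"
proof -
  have "card A = card (\<Union>y\<in>f ` A. {x \<in> A. f x = y})"
    by (rule arg_cong[where f = card]) auto
  also have "\<dots> \<le> (\<Sum>y\<in>f ` A. card {x \<in> A. f x = y})"
    using assms(1) by (intro card_UN_le) simp
  also have "\<dots> \<le> (\<Sum>y\<in>f ` A. K)"
    by (intro sum_mono assms(2))
  finally show ?thesis by (simp add: mult.commute)
qed

text \<open>The frame \<open>u 0, \<dots>, u (t - 1)\<close> spans a self-dual code of length \<open>s\<close>.  A self-dual code \<open>M\<close>
  of length \<open>m\<close> is glued to it along parameters \<open>(Y, R)\<close>: the codewords \<open>w \<in> M\<close> are lifted by a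
  correction in the span of the frame, and the vectors \<open>(Y i, R i)\<close> are added as new generators.\<close>

locale gluing =
  fixes m s t :: nat and u :: "nat \<Rightarrow> nat \<Rightarrow> 'a::{finite,field}"
  assumes frame_in_vecs: "\<And>j. j < t \<Longrightarrow> u j \<in> vecs s"
    and frame_orth: "\<And>i j. i < t \<Longrightarrow> j < t \<Longrightarrow> dot s (u i) (u j) = 0"
    and frame_span: "\<And>r. r \<in> vecs s \<Longrightarrow> (\<forall>j<t. dot s r (u j) = 0) \<Longrightarrow>
      \<exists>\<beta>. r = (\<lambda>k. \<Sum>j<t. \<beta> j * u j k)"
begin

definition frame_comb :: "(nat \<Rightarrow> 'a) \<Rightarrow> nat \<Rightarrow> 'a" where
  "frame_comb \<beta> = (\<lambda>k. \<Sum>j<t. \<beta> j * u j k)"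

definition frame_vec :: "nat \<Rightarrow> nat \<Rightarrow> 'a" where
  "frame_vec j = vec_append m (\<lambda>_. 0) (u j)"

definition lift :: "(nat \<Rightarrow> nat \<Rightarrow> 'a) \<Rightarrow> (nat \<Rightarrow> 'a) \<Rightarrow> nat \<Rightarrow> 'a" where
  "lift Y w = vec_append m w (frame_comb (\<lambda>j. - dot m w (Y j)))"

definition gen :: "(nat \<Rightarrow> nat \<Rightarrow> 'a) \<Rightarrow> (nat \<Rightarrow> nat \<Rightarrow> 'a) \<Rightarrow> nat \<Rightarrow> nat \<Rightarrow> 'a" where
  "gen Y R i = vec_append m (Y i) (R i)"

definition glued :: "(nat \<Rightarrow> 'a) set \<Rightarrow> (nat \<Rightarrow> nat \<Rightarrow> 'a) \<Rightarrow> (nat \<Rightarrow> nat \<Rightarrow> 'a) \<Rightarrow> (nat \<Rightarrow> 'a) set" where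
  "glued M Y R = {\<lambda>k. lift Y w k + (\<Sum>i<t. l i * gen Y R i k) | w l. w \<in> M}"

definition glue_params :: "((nat \<Rightarrow> nat \<Rightarrow> 'a) \<times> (nat \<Rightarrow> nat \<Rightarrow> 'a)) set" where
  "glue_params = {(Y, R). Y \<in> {..<t} \<rightarrow>\<^sub>E vecs m \<and> R \<in> {..<t} \<rightarrow>\<^sub>E vecs s \<and>
     (\<forall>i<t. \<forall>j<t. dot s (R i) (u j) = (if i = j then 1 else 0)) \<and>
     (\<forall>i<t. \<forall>j<t. dot m (Y i) (Y j) + dot s (R i) (R j) = 0)}"

definition unglue :: "(nat \<Rightarrow> 'a) set \<Rightarrow> (nat \<Rightarrow> 'a) set" where
  "unglue L = {w \<in> vecs m. \<exists>\<beta>. vec_append m w (frame_comb \<beta>) \<in> L}"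

lemma frame_comb_in_vecs: "frame_comb \<beta> \<in> vecs s"
  unfolding frame_comb_def by (rule vecs_lincomb) (use frame_in_vecs in auto)

lemma frame_comb_add: "frame_comb (\<lambda>j. \<beta> j + \<beta>' j) = (\<lambda>k. frame_comb \<beta> k + frame_comb \<beta>' k)"
  unfolding frame_comb_def by (auto simp: algebra_simps sum.distrib)

lemma frame_comb_scale: "frame_comb (\<lambda>j. c * \<beta> j) = (\<lambda>k. c * frame_comb \<beta> k)"
  unfolding frame_comb_def by (auto simp: algebra_simps sum_distrib_left)

lemma frame_comb_zero: "frame_comb (\<lambda>_. 0) = (\<lambda>_. 0)"
  unfolding frame_comb_def by simp

lemma dot_frame_comb_frame: "j < t \<Longrightarrow> dot s (frame_comb \<beta>) (u j) = 0"
  unfolding frame_comb_def dot_lincomb_left by (simp add: frame_orth)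

lemma dot_frame_comb_frame_comb: "dot s (frame_comb \<beta>) (frame_comb \<beta>') = 0"
  unfolding frame_comb_def[of \<beta>'] dot_lincomb_right by (simp add: dot_frame_comb_frame)

lemma glue_paramsD:
  assumes "(Y, R) \<in> glue_params"
  shows "\<And>i. i < t \<Longrightarrow> Y i \<in> vecs m" "\<And>i. i < t \<Longrightarrow> R i \<in> vecs s"
    "\<And>i j. i < t \<Longrightarrow> j < t \<Longrightarrow> dot s (R i) (u j) = (if i = j then 1 else 0)"
    "\<And>i j. i < t \<Longrightarrow> j < t \<Longrightarrow> dot m (Y i) (Y j) + dot s (R i) (R j) = 0"
  using assms unfolding glue_params_def by auto

lemma dot_frame_comb_dual:
  assumes "(Y, R) \<in> glue_params" "i < t"
  shows "dot s (frame_comb \<beta>) (R i) = \<beta> i"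
proof -
  have "dot s (frame_comb \<beta>) (R i) = (\<Sum>j<t. \<beta> j * (if j = i then 1 else 0))"
    unfolding frame_comb_def dot_lincomb_left
    using glue_paramsD(3)[OF assms(1) assms(2)] by (intro sum.cong) (auto simp: dot_commute)
  then show ?thesis using sum_times_delta[OF assms(2)] by simp
qed

lemma finite_glue_params: "finite glue_params"
proof (rule finite_subset)
  show "glue_params \<subseteq> ({..<t} \<rightarrow>\<^sub>E vecs m) \<times> ({..<t} \<rightarrow>\<^sub>E vecs s)"
    unfolding glue_params_def by auto
  show "finite (({..<t} \<rightarrow>\<^sub>E (vecs m :: (nat \<Rightarrow> 'a) set)) \<times> ({..<t} \<rightarrow>\<^sub>E (vecs s :: (nat \<Rightarrow> 'a) set)))"
    by (intro finite_cartesian_product finite_PiE finite_vecs) auto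
qed

lemma lift_add: "lift Y (\<lambda>k. w k + w' k) = (\<lambda>k. lift Y w k + lift Y w' k)"
  unfolding lift_def dot_add_left minus_add_distrib frame_comb_add vec_append_add ..

lemma lift_scale: "lift Y (\<lambda>k. c * w k) = (\<lambda>k. c * lift Y w k)"
proof -
  have "frame_comb (\<lambda>j. - dot m (\<lambda>k. c * w k) (Y j)) = frame_comb (\<lambda>j. c * - dot m w (Y j))"
    by (simp add: dot_scale_left)
  then show ?thesis unfolding lift_def frame_comb_scale vec_append_scale by simp
qed

lemma lift_zero: "lift Y (\<lambda>_. 0) = (\<lambda>_. 0)"
  unfolding lift_def by (simp add: frame_comb_zero vec_append_zero)

lemma dot_lift_lift: "dot (m + s) (lift Y w) (lift Y w') = dot m w w'"
  unfolding lift_def dot_vec_append dot_frame_comb_frame_comb by simp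

lemma dot_lift_gen: "(Y, R) \<in> glue_params \<Longrightarrow> i < t \<Longrightarrow> dot (m + s) (lift Y w) (gen Y R i) = 0"
  unfolding lift_def gen_def dot_vec_append by (simp add: dot_frame_comb_dual)

lemma dot_gen_gen:
  "(Y, R) \<in> glue_params \<Longrightarrow> i < t \<Longrightarrow> j < t \<Longrightarrow> dot (m + s) (gen Y R i) (gen Y R j) = 0"
  unfolding gen_def dot_vec_append by (rule glue_paramsD(4))

lemma dot_lift_frame_vec: "j < t \<Longrightarrow> dot (m + s) (lift Y w) (frame_vec j) = 0"
  unfolding lift_def frame_vec_def dot_vec_append by (simp add: dot_frame_comb_frame)

lemma dot_gen_frame_vec:
  "(Y, R) \<in> glue_params \<Longrightarrow> i < t \<Longrightarrow> j < t \<Longrightarrow>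
    dot (m + s) (gen Y R i) (frame_vec j) = (if i = j then 1 else 0)"
  unfolding gen_def frame_vec_def dot_vec_append by (simp add: glue_paramsD(3))

lemma dot_glued_frame_vec:
  assumes "(Y, R) \<in> glue_params" "j < t"
  shows "dot (m + s) (\<lambda>k. lift Y w k + (\<Sum>i<t. l i * gen Y R i k)) (frame_vec j) = l j"
proof -
  have "dot (m + s) (\<lambda>k. lift Y w k + (\<Sum>i<t. l i * gen Y R i k)) (frame_vec j) =
      (\<Sum>i<t. l i * (if i = j then 1 else 0))"
    unfolding dot_add_left dot_lincomb_left dot_lift_frame_vec[OF assms(2)]
    using dot_gen_frame_vec[OF assms(1) _ assms(2)] by simp
  then show ?thesis using sum_times_delta[OF assms(2)] by simp
qed

lemma glued_intro: "w \<in> M \<Longrightarrow> x = (\<lambda>k. lift Y w k + (\<Sum>i<t. l i * gen Y R i k)) \<Longrightarrow> x \<in> glued M Y R"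
  unfolding glued_def by blast

lemma glued_elim:
  assumes "x \<in> glued M Y R"
  obtains w l where "w \<in> M" "x = (\<lambda>k. lift Y w k + (\<Sum>i<t. l i * gen Y R i k))"
  using assms unfolding glued_def by blast

lemma lift_in_glued: "w \<in> M \<Longrightarrow> lift Y w \<in> glued M Y R"
  by (rule glued_intro[where l = "\<lambda>_. 0"]) simp_all

lemma gen_in_glued:
  assumes "is_code m M" "i < t"
  shows "gen Y R i \<in> glued M Y R"
proof (rule glued_intro[OF is_codeD(2)[OF assms(1)], where l = "\<lambda>j. if j = i then 1 else 0"])
  show "gen Y R i = (\<lambda>k. lift Y (\<lambda>_. 0) k + (\<Sum>j<t. (if j = i then 1 else 0) * gen Y R j k))"
    using sum_times_delta[OF assms(2), of "\<lambda>j. gen Y R j _"] by (simp add: lift_zero mult.commute)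
qed

lemma gen_in_vecs: "(Y, R) \<in> glue_params \<Longrightarrow> i < t \<Longrightarrow> gen Y R i \<in> vecs (m + s)"
  unfolding gen_def by (rule vec_append_in_vecs) (auto dest: glue_paramsD)

lemma is_code_glued:
  assumes M: "is_code m M" and YR: "(Y, R) \<in> glue_params"
  shows "is_code (m + s) (glued M Y R)"
  unfolding is_code_def
proof (intro conjI ballI allI)
  show "glued M Y R \<subseteq> vecs (m + s)"
  proof
    fix x assume "x \<in> glued M Y R"
    then obtain w l where w: "w \<in> M" and x: "x = (\<lambda>k. lift Y w k + (\<Sum>i<t. l i * gen Y R i k))"
      by (rule glued_elim)
    have "lift Y w \<in> vecs (m + s)"
      using w is_codeD(1)[OF M] unfolding lift_def by (auto intro: vec_append_in_vecs frame_comb_in_vecs)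
    moreover have "(\<lambda>k. \<Sum>i<t. l i * gen Y R i k) \<in> vecs (m + s)"
      by (rule vecs_lincomb) (rule gen_in_vecs[OF YR], simp)
    ultimately show "x \<in> vecs (m + s)" unfolding x by (rule vecs_add)
  qed
  show "(\<lambda>_. 0) \<in> glued M Y R"
    using lift_in_glued[OF is_codeD(2)[OF M]] by (simp add: lift_zero)
next
  fix x y assume x: "x \<in> glued M Y R" and y: "y \<in> glued M Y R"
  obtain w l where w: "w \<in> M" and x: "x = (\<lambda>k. lift Y w k + (\<Sum>i<t. l i * gen Y R i k))"
    using x by (rule glued_elim)
  obtain w' l' where w': "w' \<in> M" and y: "y = (\<lambda>k. lift Y w' k + (\<Sum>i<t. l' i * gen Y R i k))"
    using y by (rule glued_elim)
  have "(\<lambda>k. x k + y k) = (\<lambda>k. lift Y (\<lambda>k. w k + w' k) k + (\<Sum>i<t. (l i + l' i) * gen Y R i k))"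
    unfolding x y lift_add by (auto simp: algebra_simps sum.distrib)
  then show "(\<lambda>k. x k + y k) \<in> glued M Y R"
    using is_codeD(3)[OF M w w'] by (rule glued_intro[rotated])
next
  fix a x assume "x \<in> glued M Y R"
  then obtain w l where w: "w \<in> M" and x: "x = (\<lambda>k. lift Y w k + (\<Sum>i<t. l i * gen Y R i k))"
    by (rule glued_elim)
  have "(\<lambda>k. a * x k) = (\<lambda>k. lift Y (\<lambda>k. a * w k) k + (\<Sum>i<t. (a * l i) * gen Y R i k))"
    unfolding x lift_scale by (auto simp: algebra_simps sum_distrib_left)
  then show "(\<lambda>k. a * x k) \<in> glued M Y R"
    using is_codeD(4)[OF M w] by (rule glued_intro[rotated])
qed

lemma glued_orth:
  assumes M: "\<And>w w'. w \<in> M \<Longrightarrow> w' \<in> M \<Longrightarrow> dot m w w' = 0" and YR: "(Y, R) \<in> glue_params"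
    and x: "x \<in> glued M Y R" and y: "y \<in> glued M Y R"
  shows "dot (m + s) x y = 0"
proof -
  obtain w l where w: "w \<in> M" and x: "x = (\<lambda>k. lift Y w k + (\<Sum>i<t. l i * gen Y R i k))"
    using x by (rule glued_elim)
  obtain w' l' where w': "w' \<in> M" and y: "y = (\<lambda>k. lift Y w' k + (\<Sum>i<t. l' i * gen Y R i k))"
    using y by (rule glued_elim)
  have "dot (m + s) (lift Y w) y = 0"
    unfolding y dot_add_right dot_lincomb_right dot_lift_lift
    using M[OF w w'] dot_lift_gen[OF YR] by simp
  moreover have "dot (m + s) (gen Y R i) y = 0" if "i < t" for i
    unfolding y dot_add_right dot_lincomb_right
    using that dot_lift_gen[OF YR that] dot_gen_gen[OF YR that] by (simp add: dot_commute)
  ultimately show ?thesis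
    unfolding x dot_add_left dot_lincomb_left by simp
qed

lemma glued_orth_frame_vecs:
  assumes YR: "(Y, R) \<in> glue_params" and x: "x \<in> glued M Y R"
    and orth: "\<And>j. j < t \<Longrightarrow> dot (m + s) x (frame_vec j) = 0"
  shows "\<exists>w\<in>M. x = lift Y w"
proof -
  obtain w l where w: "w \<in> M" and x: "x = (\<lambda>k. lift Y w k + (\<Sum>i<t. l i * gen Y R i k))"
    using x by (rule glued_elim)
  have "l j = 0" if "j < t" for j
    using orth[OF that] dot_glued_frame_vec[OF YR that, of w l] x by simp
  then have "x = lift Y w" using x by simp
  then show ?thesis using w by blast
qed

lemma unglue_glued:
  assumes M: "is_code m M" and YR: "(Y, R) \<in> glue_params"
  shows "unglue (glued M Y R) = M"
proof safe
  fix w assume w: "w \<in> M"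
  then show "w \<in> unglue (glued M Y R)"
    using is_codeD(1)[OF M] lift_in_glued[OF w] unfolding unglue_def lift_def by blast
next
  fix w assume "w \<in> unglue (glued M Y R)"
  then obtain \<beta> where w: "w \<in> vecs m" and in_glued: "vec_append m w (frame_comb \<beta>) \<in> glued M Y R"
    unfolding unglue_def by blast
  have "dot (m + s) (vec_append m w (frame_comb \<beta>)) (frame_vec j) = 0" if "j < t" for j
    unfolding frame_vec_def dot_vec_append using dot_frame_comb_frame[OF that] by simp
  then obtain w0 where w0: "w0 \<in> M" "vec_append m w (frame_comb \<beta>) = lift Y w0"
    using glued_orth_frame_vecs[OF YR in_glued] by blast
  have "w0 \<in> vecs m" using w0(1) is_codeD(1)[OF M] by auto
  then have "w = w0"
    using vec_append_inj(1)[OF w _ w0(2)[unfolded lift_def]] by blast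
  then show "w \<in> M" using w0(1) by simp
qed

lemma frame_comb_cong: "(\<And>j. j < t \<Longrightarrow> \<beta> j = \<beta>' j) \<Longrightarrow> frame_comb \<beta> = frame_comb \<beta>'"
  unfolding frame_comb_def by (auto intro!: sum.cong)

lemma orth_glued_imp_lift:
  assumes M: "self_dual m M" and YR: "(Y, R) \<in> glue_params" and v: "v \<in> vecs (m + s)"
    and orth: "\<And>x. x \<in> glued M Y R \<Longrightarrow> dot (m + s) v x = 0"
    and orth_frame: "\<And>j. j < t \<Longrightarrow> dot (m + s) v (frame_vec j) = 0"
  shows "\<exists>a\<in>M. v = lift Y a"
proof -
  have Mc: "is_code m M" using M unfolding self_dual_def by simp
  obtain a b where v_ab: "v = vec_append m a b" and a: "a \<in> vecs m" and b: "b \<in> vecs s"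
    using v by (rule vec_append_split)
  have "\<forall>j<t. dot s b (u j) = 0"
    using orth_frame unfolding v_ab frame_vec_def dot_vec_append by simp
  then obtain \<beta> where \<beta>: "b = frame_comb \<beta>"
    using frame_span[OF b] unfolding frame_comb_def by blast
  have "a \<in> dual_code m M"
    unfolding dual_code_def
  proof (intro CollectI conjI ballI a)
    fix w assume w: "w \<in> M"
    have "dot (m + s) v (lift Y w) = dot m a w"
      unfolding v_ab \<beta> lift_def dot_vec_append dot_frame_comb_frame_comb by simp
    then show "dot m a w = 0" using orth[OF lift_in_glued[OF w]] by simp
  qed
  then have aM: "a \<in> M" using M unfolding self_dual_def by simp
  have "\<beta> i = - dot m a (Y i)" if i: "i < t" for i
  proof -
    have "dot (m + s) v (gen Y R i) = dot m a (Y i) + \<beta> i"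
      unfolding v_ab \<beta> gen_def dot_vec_append dot_frame_comb_dual[OF YR i] ..
    then show ?thesis
      using orth[OF gen_in_glued[OF Mc i]] by (simp add: eq_neg_iff_add_eq_0 add.commute)
  qed
  then have "frame_comb \<beta> = frame_comb (\<lambda>j. - dot m a (Y j))"
    by (rule frame_comb_cong)
  then have "v = lift Y a"
    unfolding v_ab \<beta> lift_def by simp
  then show ?thesis using aM by blast
qed

text \<open>A vector orthogonal to the glued code becomes a lifted codeword after subtracting the
  generators with the coefficients read off by the frame vectors.\<close>

lemma glued_dual_subset:
  assumes M: "self_dual m M" and YR: "(Y, R) \<in> glue_params"
  shows "dual_code (m + s) (glued M Y R) \<subseteq> glued M Y R"
proof
  fix v assume v: "v \<in> dual_code (m + s) (glued M Y R)"
  have Mc: "is_code m M" using M unfolding self_dual_def by simp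
  have v_orth: "dot (m + s) v x = 0" if "x \<in> glued M Y R" for x
    using v that unfolding dual_code_def by blast
  define l where "l j = dot (m + s) v (frame_vec j)" for j
  define v' where "v' = (\<lambda>k. v k - (\<Sum>i<t. l i * gen Y R i k))"
  have "v' \<in> vecs (m + s)"
    unfolding v'_def using v gen_in_vecs[OF YR]
    by (intro vecs_diff vecs_lincomb) (auto simp: dual_code_def)
  moreover have "dot (m + s) v' x = 0" if x: "x \<in> glued M Y R" for x
    unfolding v'_def dot_diff_left dot_lincomb_left
    using v_orth[OF x] glued_orth[OF self_dual_orth[OF M] YR gen_in_glued[OF Mc] x] by simp
  moreover have "dot (m + s) v' (frame_vec j) = 0" if j: "j < t" for j
  proof -
    have "dot (m + s) v' (frame_vec j) = l j - (\<Sum>i<t. l i * (if i = j then 1 else 0))"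
      unfolding v'_def dot_diff_left dot_lincomb_left l_def using dot_gen_frame_vec[OF YR _ j] by simp
    then show ?thesis using sum_times_delta[OF j, of l] by simp
  qed
  ultimately obtain a where a: "a \<in> M" "v' = lift Y a"
    using orth_glued_imp_lift[OF M YR] by blast
  have "v = (\<lambda>k. v' k + (\<Sum>i<t. l i * gen Y R i k))"
    unfolding v'_def by simp
  then show "v \<in> glued M Y R"
    using a by (intro glued_intro[OF a(1)]) simp
qed

lemma self_dual_glued:
  assumes M: "self_dual m M" and YR: "(Y, R) \<in> glue_params"
  shows "self_dual (m + s) (glued M Y R)"
proof (rule self_dualI)
  show "is_code (m + s) (glued M Y R)"
    using M YR is_code_glued unfolding self_dual_def by simp
  show "dot (m + s) x y = 0" if "x \<in> glued M Y R" "y \<in> glued M Y R" for x y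
    using glued_orth[OF self_dual_orth[OF M] YR that] .
  show "dual_code (m + s) (glued M Y R) \<subseteq> glued M Y R"
    by (rule glued_dual_subset[OF M YR])
qed

lemma glued_gen_diff:
  assumes M: "is_code m M" and YR: "(Y, R) \<in> glue_params" and YR': "(Y', R') \<in> glue_params"
    and eq: "glued M Y R = glued M Y' R'" and i: "i < t"
  shows "(\<lambda>k. Y i k - Y' i k) \<in> M" and "Y i = Y' i \<Longrightarrow> R i = R' i"
proof -
  let ?d = "\<lambda>k. gen Y R i k - gen Y' R' i k"
  have "gen Y R i \<in> glued M Y' R'"
    using gen_in_glued[OF M i, of Y R] unfolding eq .
  then have "?d \<in> glued M Y' R'"
    by (rule code_diff[OF is_code_glued[OF M YR'] _ gen_in_glued[OF M i]])
  moreover have "dot (m + s) ?d (frame_vec j) = 0" if "j < t" for j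
    using dot_gen_frame_vec[OF YR i that] dot_gen_frame_vec[OF YR' i that] by (simp add: dot_diff_left)
  ultimately obtain w where w: "w \<in> M" "?d = lift Y' w"
    using glued_orth_frame_vecs[OF YR'] by blast
  have d: "vec_append m (\<lambda>k. Y i k - Y' i k) (\<lambda>k. R i k - R' i k)
      = vec_append m w (frame_comb (\<lambda>j. - dot m w (Y' j)))"
    using w(2) unfolding gen_def lift_def vec_append_diff .
  have "(\<lambda>k. Y i k - Y' i k) \<in> vecs m"
    using glue_paramsD(1)[OF YR i] glue_paramsD(1)[OF YR' i] by (rule vecs_diff)
  moreover have "w \<in> vecs m" using w(1) is_codeD(1)[OF M] by auto
  ultimately have Yw: "(\<lambda>k. Y i k - Y' i k) = w" and Rw: "(\<lambda>k. R i k - R' i k) = frame_comb (\<lambda>j. - dot m w (Y' j))"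
    using vec_append_inj[OF _ _ d] by auto
  show "(\<lambda>k. Y i k - Y' i k) \<in> M" using Yw w(1) by simp
  assume "Y i = Y' i"
  then have "w = (\<lambda>_. 0)" using Yw by auto
  then have "(\<lambda>k. R i k - R' i k) = (\<lambda>_. 0)" using Rw by (simp add: frame_comb_zero)
  then show "R i = R' i" by (auto simp: fun_eq_iff dest: fun_cong)
qed

lemma glue_params_eqI:
  assumes "(Y, R) \<in> glue_params" "(Y', R') \<in> glue_params" "\<And>i. i < t \<Longrightarrow> Y i = Y' i \<and> R i = R' i"
  shows "Y = Y' \<and> R = R'"
proof
  show "Y = Y'"
  proof
    fix i show "Y i = Y' i"
      using assms by (cases "i < t") (auto simp: glue_params_def PiE_def extensional_def)
  qed
  show "R = R'"
  proof
    fix i show "R i = R' i"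
      using assms by (cases "i < t") (auto simp: glue_params_def PiE_def extensional_def)
  qed
qed

text \<open>The code is recovered by ungluing, and the parameters are determined by the differences
  \<open>Y i - Y\<^sub>0 i\<close>, which lie in \<open>M\<close>.\<close>

lemma card_glued_fiber_le:
  assumes M0: "self_dual m M0" and YR0: "(Y0, R0) \<in> glue_params"
  shows "card {(M, Y, R). self_dual m M \<and> (Y, R) \<in> glue_params \<and> glued M Y R = glued M0 Y0 R0}
    \<le> (CARD('a) ^ (m div 2)) ^ t"
proof -
  let ?F = "{(M, Y, R). self_dual m M \<and> (Y, R) \<in> glue_params \<and> glued M Y R = glued M0 Y0 R0}"
  have M0c: "is_code m M0" using M0 unfolding self_dual_def by simp
  have fiber: "M = M0" "glued M0 Y R = glued M0 Y0 R0" "(Y, R) \<in> glue_params"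
    if "(M, Y, R) \<in> ?F" for M Y R
  proof -
    have M: "is_code m M" and YR: "(Y, R) \<in> glue_params" and eq: "glued M Y R = glued M0 Y0 R0"
      using that by (auto simp: self_dual_def)
    show "M = M0"
      using unglue_glued[OF M0c YR0] unglue_glued[OF M YR] unfolding eq by simp
    then show "glued M0 Y R = glued M0 Y0 R0" "(Y, R) \<in> glue_params" using YR eq by simp_all
  qed
  define g where "g = (\<lambda>(M :: (nat \<Rightarrow> 'a) set, Y :: nat \<Rightarrow> nat \<Rightarrow> 'a, R :: nat \<Rightarrow> nat \<Rightarrow> 'a).
    \<lambda>i\<in>{..<t}. \<lambda>k. Y i k - Y0 i k)"
  have "inj_on g ?F"
  proof (rule inj_onI)
    fix x x' assume x: "x \<in> ?F" and x': "x' \<in> ?F" and gx: "g x = g x'"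
    obtain M Y R M' Y' R' where xx': "x = (M, Y, R)" "x' = (M', Y', R')" by (cases x, cases x')
    note fx = fiber[OF x[unfolded xx'(1)]] and fx' = fiber[OF x'[unfolded xx'(2)]]
    have Y: "Y i = Y' i" if "i < t" for i
    proof
      fix k show "Y i k = Y' i k"
        using fun_cong[OF fun_cong[OF gx, of i], of k] that unfolding xx' g_def by simp
    qed
    have "R i = R' i" if "i < t" for i
      using glued_gen_diff(2)[OF M0c fx(3) fx'(3) _ that Y[OF that]] fx(2) fx'(2) by simp
    then show "x = x'"
      using glue_params_eqI[OF fx(3) fx'(3)] Y fx(1) fx'(1) unfolding xx' by simp
  qed
  moreover have "g x \<in> {..<t} \<rightarrow>\<^sub>E M0" if x: "x \<in> ?F" for x
  proof -
    obtain M Y R where xx: "x = (M, Y, R)" by (cases x)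
    then show ?thesis
      using glued_gen_diff(1)[OF M0c fiber(3) YR0 fiber(2)] x unfolding xx g_def by auto
  qed
  ultimately have "card ?F \<le> card ({..<t} \<rightarrow>\<^sub>E M0)"
    using is_code_finite[OF M0c] by (intro card_inj_on_le finite_PiE) blast+
  also have "\<dots> = (CARD('a) ^ (m div 2)) ^ t"
    by (simp add: card_PiE self_dual_even_card(2)[OF M0])
  finally show ?thesis .
qed

lemma card_glue_params_le:
  "num_sd TYPE('a) m * card glue_params \<le> num_sd TYPE('a) (m + s) * (CARD('a) ^ (m div 2)) ^ t"
proof -
  let ?A = "{M :: (nat \<Rightarrow> 'a) set. self_dual m M} \<times> glue_params"
  let ?f = "\<lambda>(M, Y, R). glued M Y R"
  have "card ?A \<le> (CARD('a) ^ (m div 2)) ^ t * card (?f ` ?A)"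
  proof (rule card_le_mult_card_image)
    show "finite ?A" using finite_self_dual_codes finite_glue_params by blast
    fix L assume "L \<in> ?f ` ?A"
    then obtain M0 Y0 R0 where M0: "self_dual m M0" and YR0: "(Y0, R0) \<in> glue_params"
      and L: "L = glued M0 Y0 R0" by force
    have "{x \<in> ?A. ?f x = L}
        = {(M, Y, R). self_dual m M \<and> (Y, R) \<in> glue_params \<and> glued M Y R = glued M0 Y0 R0}"
      unfolding L by auto
    then show "card {x \<in> ?A. ?f x = L} \<le> (CARD('a) ^ (m div 2)) ^ t"
      using card_glued_fiber_le[OF M0 YR0] by simp
  qed
  also have "card (?f ` ?A) \<le> num_sd TYPE('a) (m + s)"
  proof -
    have "?f ` ?A \<subseteq> {L. self_dual (m + s) L}"
      using self_dual_glued by auto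
    then show ?thesis
      unfolding num_sd_def by (rule card_mono[OF finite_self_dual_codes])
  qed
  finally show ?thesis
    by (simp add: num_sd_def card_cartesian_product mult.commute)
qed

lemma is_code_unglue:
  assumes L: "is_code (m + s) L"
  shows "is_code m (unglue L)"
  unfolding is_code_def
proof (intro conjI ballI allI)
  show "unglue L \<subseteq> vecs m" unfolding unglue_def by auto
  have "vec_append m (\<lambda>_. 0) (frame_comb (\<lambda>_. 0)) \<in> L"
    using is_codeD(2)[OF L] by (simp add: frame_comb_zero vec_append_zero)
  then show "(\<lambda>_. 0) \<in> unglue L" unfolding unglue_def by auto
next
  fix x y assume "x \<in> unglue L" "y \<in> unglue L"
  then obtain \<beta> \<beta>' where x: "x \<in> vecs m" "vec_append m x (frame_comb \<beta>) \<in> L"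
    and y: "y \<in> vecs m" "vec_append m y (frame_comb \<beta>') \<in> L"
    unfolding unglue_def by blast
  have "vec_append m (\<lambda>i. x i + y i) (frame_comb (\<lambda>j. \<beta> j + \<beta>' j)) \<in> L"
    using is_codeD(3)[OF L x(2) y(2)] by (simp add: frame_comb_add vec_append_add)
  then show "(\<lambda>i. x i + y i) \<in> unglue L"
    unfolding unglue_def using vecs_add[OF x(1) y(1)] by blast
next
  fix a x assume "x \<in> unglue L"
  then obtain \<beta> where x: "x \<in> vecs m" "vec_append m x (frame_comb \<beta>) \<in> L"
    unfolding unglue_def by blast
  have "vec_append m (\<lambda>i. a * x i) (frame_comb (\<lambda>j. a * \<beta> j)) \<in> L"
    using is_codeD(4)[OF L x(2)] by (simp add: frame_comb_scale vec_append_scale)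
  then show "(\<lambda>i. a * x i) \<in> unglue L"
    unfolding unglue_def using vecs_scale[OF x(1)] by blast
qed

lemma orth_frame_vecs_split:
  assumes x: "x \<in> vecs (m + s)" and orth: "\<And>j. j < t \<Longrightarrow> dot (m + s) x (frame_vec j) = 0"
  obtains a \<beta> where "x = vec_append m a (frame_comb \<beta>)" "a \<in> vecs m"
proof -
  obtain a b where ab: "x = vec_append m a b" "a \<in> vecs m" "b \<in> vecs s"
    using x by (rule vec_append_split)
  have "\<forall>j<t. dot s b (u j) = 0"
    using orth unfolding ab frame_vec_def dot_vec_append by simp
  then obtain \<beta> where "b = frame_comb \<beta>"
    using frame_span[OF ab(3)] unfolding frame_comb_def by blast
  then show ?thesis using that ab by blast
qed

text \<open>For \<open>w\<close> orthogonal to \<open>unglue L\<close>, the functional \<open>\<langle>-, (w, 0)\<rangle>\<close> on \<open>L\<close> vanishes where the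
  functionals \<open>\<langle>-, frame_vec j\<rangle>\<close> do, so it is a combination of them; subtracting the corresponding
  combination of frame vectors from \<open>(w, 0)\<close> yields a vector of \<open>L\<^sup>\<bottom> = L\<close>.\<close>

lemma dual_code_unglue_subset:
  assumes L: "self_dual (m + s) L"
  shows "dual_code m (unglue L) \<subseteq> unglue L"
proof
  fix w assume w: "w \<in> dual_code m (unglue L)"
  have Lc: "is_code (m + s) L" using L unfolding self_dual_def by simp
  have wv: "w \<in> vecs m" and w_orth: "\<And>c. c \<in> unglue L \<Longrightarrow> dot m w c = 0"
    using w unfolding dual_code_def by auto
  have "dot (m + s) x (vec_append m w (\<lambda>_. 0)) = 0"
    if x: "x \<in> L" and orth: "\<forall>j<t. dot (m + s) x (frame_vec j) = 0" for x
  proof -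
    obtain a \<beta> where a: "x = vec_append m a (frame_comb \<beta>)" "a \<in> vecs m"
      using orth_frame_vecs_split[of x] is_codeD(1)[OF Lc] x orth by blast
    then have "a \<in> unglue L" using x unfolding unglue_def by auto
    then show ?thesis using w_orth unfolding a(1) dot_vec_append by (simp add: dot_commute)
  qed
  then obtain \<beta> where \<beta>: "\<And>x. x \<in> L \<Longrightarrow>
      dot (m + s) x (vec_append m w (\<lambda>_. 0)) = (\<Sum>j<t. \<beta> j * dot (m + s) x (frame_vec j))"
    using dot_lincomb_of_kernel[OF Lc] by blast
  define z where "z = vec_append m w (frame_comb (\<lambda>j. - \<beta> j))"
  have "dot (m + s) z x = 0" if x: "x \<in> L" for x
  proof -
    obtain a b where ab: "x = vec_append m a b" "a \<in> vecs m" "b \<in> vecs s"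
      using is_codeD(1)[OF Lc] x by (blast elim: vec_append_split)
    have "dot (m + s) z x = dot m w a - (\<Sum>j<t. \<beta> j * dot s b (u j))"
      unfolding z_def ab dot_vec_append frame_comb_def dot_lincomb_left
      by (simp add: dot_commute sum_negf)
    also have "(\<Sum>j<t. \<beta> j * dot s b (u j)) = dot m a w"
      using \<beta>[OF x] unfolding ab frame_vec_def dot_vec_append by simp
    finally show ?thesis by (simp add: dot_commute)
  qed
  moreover have "z \<in> vecs (m + s)"
    unfolding z_def by (rule vec_append_in_vecs[OF wv frame_comb_in_vecs])
  ultimately have "z \<in> L"
    using L unfolding self_dual_def dual_code_def by auto
  then show "w \<in> unglue L" unfolding unglue_def z_def using wv by auto
qed

lemma self_dual_unglue:
  assumes L: "self_dual (m + s) L"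
  shows "self_dual m (unglue L)"
proof (rule self_dualI)
  show "is_code m (unglue L)"
    using L is_code_unglue unfolding self_dual_def by simp
  show "dot m w w' = 0" if ww': "w \<in> unglue L" "w' \<in> unglue L" for w w'
  proof -
    obtain \<beta> \<beta>' where "vec_append m w (frame_comb \<beta>) \<in> L" "vec_append m w' (frame_comb \<beta>') \<in> L"
      using ww' unfolding unglue_def by blast
    from self_dual_orth[OF L this] show ?thesis
      by (simp add: dot_vec_append dot_frame_comb_frame_comb)
  qed
  show "dual_code m (unglue L) \<subseteq> unglue L"
    by (rule dual_code_unglue_subset[OF L])
qed

end

section \<open>Two small frames\<close>

lemma dot_2: "dot 2 x y = x 0 * y 0 + x 1 * y 1"
  unfolding dot_def by (simp add: numeral_2_eq_2 lessThan_Suc)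

lemma dot_4: "dot 4 x y = x 0 * y 0 + x 1 * y 1 + x 2 * y 2 + x 3 * y 3"
proof -
  have "{..<4::nat} = {0, 1, 2, 3}" by auto
  then show ?thesis unfolding dot_def by (simp add: algebra_simps)
qed

definition frame2 :: "'a::field \<Rightarrow> nat \<Rightarrow> nat \<Rightarrow> 'a" where
  "frame2 a = (\<lambda>j k. if k = 0 then 1 else if k = 1 then a else 0)"

lemma gluing_frame2:
  fixes a :: "'a::{finite,field}"
  assumes a: "a * a = -1"
  shows "gluing 2 1 (frame2 a)"
proof
  show "frame2 a j \<in> vecs 2" for j unfolding frame2_def vecs_def by auto
  show "dot 2 (frame2 a i) (frame2 a j) = 0" for i j
    unfolding dot_2 frame2_def using a by simp
next
  fix r :: "nat \<Rightarrow> 'a" assume r: "r \<in> vecs 2" and "\<forall>j<1. dot 2 r (frame2 a j) = 0"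
  then have r01: "r 0 + r 1 * a = 0" unfolding dot_2 frame2_def by simp
  have r_eq: "r k = - (a * r 1) * frame2 a 0 k" for k
  proof -
    consider "k = 0" | "k = 1" | "2 \<le> k" by linarith
    then show ?thesis
    proof cases
      case 1 then show ?thesis using r01 by (simp add: frame2_def algebra_simps eq_neg_iff_add_eq_0)
    next
      case 2
      have "- (a * r 1) * a = - (a * a) * r 1" by (simp add: algebra_simps)
      then show ?thesis using 2 a by (simp add: frame2_def)
    next
      case 3 then show ?thesis using r by (simp add: frame2_def vecsD)
    qed
  qed
  show "\<exists>\<beta>. r = (\<lambda>k. \<Sum>j<1. \<beta> j * frame2 a j k)"
  proof (intro exI[of _ "\<lambda>_. - (a * r 1)"] ext)
    fix k show "r k = (\<Sum>j<1. - (a * r 1) * frame2 a j k)"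
      using r_eq[of k] by simp
  qed
qed

lemma sum_sq_char_2:
  fixes f :: "nat \<Rightarrow> 'a::field"
  assumes "(2::'a) = 0"
  shows "(\<Sum>i<n. f i * f i) = (\<Sum>i<n. f i) * (\<Sum>i<n. f i)"
proof (induction n)
  case (Suc n)
  have "(\<Sum>i<Suc n. f i) * (\<Sum>i<Suc n. f i) =
      (\<Sum>i<n. f i) * (\<Sum>i<n. f i) + 2 * ((\<Sum>i<n. f i) * f n) + f n * f n"
    by (simp add: algebra_simps)
  then show ?case using Suc assms by simp
qed simp

lemma card_vecs_le_glue_params_frame2:
  fixes a :: "'a::{finite,field}"
  assumes a: "a * a = -1" and two: "(2::'a) \<noteq> 0"
  shows "card (vecs m :: (nat \<Rightarrow> 'a) set) \<le> card (gluing.glue_params m 2 1 (frame2 a))"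
proof -
  interpret gluing m 2 1 "frame2 a" by (rule gluing_frame2[OF a])
  txt \<open>Any \<open>y\<close> extends, with \<open>R 0 = (1 + \<alpha>, a \<alpha>)\<close> where \<open>2 \<alpha> = - (1 + \<langle>y, y\<rangle>)\<close>.\<close>
  define \<alpha> where "\<alpha> y = - (1 + dot m y y) / 2" for y :: "nat \<Rightarrow> 'a"
  define r where "r y = (\<lambda>k::nat. if k = 0 then 1 + \<alpha> y else if k = 1 then a * \<alpha> y else 0)" for y
  define F where "F y = ((\<lambda>i\<in>{..<1::nat}. y), (\<lambda>i\<in>{..<1::nat}. r y))" for y
  have "inj_on F (vecs m)"
    by (rule inj_onI) (auto simp: F_def fun_eq_iff restrict_def, metis)
  moreover have "F ` vecs m \<subseteq> glue_params"
  proof (rule image_subsetI)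
    fix y :: "nat \<Rightarrow> 'a" assume y: "y \<in> vecs m"
    have r: "r y 0 = 1 + \<alpha> y" "r y 1 = a * \<alpha> y" unfolding r_def by simp_all
    have aa: "a * \<alpha> y * a = - \<alpha> y" "(a * \<alpha> y) * (a * \<alpha> y) = - (\<alpha> y * \<alpha> y)"
    proof -
      have "a * \<alpha> y * a = (a * a) * \<alpha> y" "(a * \<alpha> y) * (a * \<alpha> y) = (a * a) * (\<alpha> y * \<alpha> y)"
        by (simp_all add: mult_ac)
      then show "a * \<alpha> y * a = - \<alpha> y" "(a * \<alpha> y) * (a * \<alpha> y) = - (\<alpha> y * \<alpha> y)"
        using a by simp_all
    qed
    have "r y \<in> vecs 2" unfolding r_def vecs_def by auto
    moreover have "dot 2 (r y) (frame2 a 0) = 1"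
      unfolding dot_2 r frame2_def using aa(1) by simp
    moreover have "dot 2 (r y) (r y) = 1 + 2 * \<alpha> y"
      unfolding dot_2 r aa(2) by (simp add: algebra_simps)
    moreover have "2 * \<alpha> y = - (1 + dot m y y)" unfolding \<alpha>_def using two by simp
    ultimately show "F y \<in> glue_params"
      unfolding glue_params_def F_def using y by (auto simp: algebra_simps)
  qed
  ultimately show ?thesis
    using card_inj_on_le finite_glue_params by blast
qed

text \<open>In characteristic 2, \<open>\<langle>y, y\<rangle> = (\<Sum>i y i)\<^sup>2\<close>: take \<open>R 0 = (1, 0)\<close> and any \<open>y\<close> with coordinate
  sum 1.\<close>

lemma card_vecs_le_glue_params_frame2_char_2:
  fixes a :: "'a::{finite,field}"
  assumes a: "a * a = -1" and two: "(2::'a) = 0" and m: "1 \<le> m"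
  shows "card (vecs (m - 1) :: (nat \<Rightarrow> 'a) set) \<le> card (gluing.glue_params m 2 1 (frame2 a))"
proof -
  interpret gluing m 2 1 "frame2 a" by (rule gluing_frame2[OF a])
  define y where "y x = x(m - 1 := 1 - (\<Sum>i<m - 1. x i))" for x :: "nat \<Rightarrow> 'a"
  define r0 where "r0 = (\<lambda>k::nat. if k = 0 then (1::'a) else 0)"
  define F where "F x = ((\<lambda>i\<in>{..<1::nat}. y x), (\<lambda>i\<in>{..<1::nat}. r0))" for x
  have "inj_on F (vecs (m - 1))"
  proof (rule inj_onI)
    fix x x' assume x: "x \<in> vecs (m - 1)" and x': "x' \<in> vecs (m - 1)" and eq: "F x = F x'"
    have yy: "y x = y x'" using fun_cong[OF arg_cong[where f = fst, OF eq], of 0] unfolding F_def by simp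
    show "x = x'"
    proof
      fix i show "x i = x' i"
      proof (cases "i < m - 1")
        case True then show ?thesis using fun_cong[OF yy, of i] unfolding y_def by simp
      next
        case False then show ?thesis using x x' by (simp add: vecsD)
      qed
    qed
  qed
  moreover have "F ` vecs (m - 1) \<subseteq> glue_params"
  proof (rule image_subsetI)
    fix x :: "nat \<Rightarrow> 'a" assume x: "x \<in> vecs (m - 1)"
    have "y x \<in> vecs m" using x m unfolding y_def vecs_def by auto
    moreover have "(\<Sum>i<m. y x i) = 1"
    proof -
      have "{..<m} = insert (m - 1) {..<m - 1}" using m by auto
      then have "(\<Sum>i<m. y x i) = y x (m - 1) + (\<Sum>i<m - 1. y x i)" by simp
      also have "(\<Sum>i<m - 1. y x i) = (\<Sum>i<m - 1. x i)" unfolding y_def by (rule sum.cong) auto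
      finally show ?thesis unfolding y_def by simp
    qed
    then have "dot m (y x) (y x) + dot 2 r0 r0 = 0"
      unfolding dot_def using sum_sq_char_2[OF two, of "y x" m] two
      by (simp add: dot_2[unfolded dot_def] r0_def)
    moreover have "r0 \<in> vecs 2" "dot 2 r0 (frame2 a 0) = 1"
      unfolding r0_def vecs_def dot_2 frame2_def by auto
    ultimately show "F x \<in> glue_params"
      unfolding glue_params_def F_def by auto
  qed
  ultimately show ?thesis
    using card_inj_on_le finite_glue_params by blast
qed

lemma card_glue_params_frame2:
  fixes a :: "'a::{finite,field}"
  assumes a: "a * a = -1" and m: "1 \<le> m"
  shows "CARD('a) ^ (m - 1) \<le> card (gluing.glue_params m 2 1 (frame2 a))"
proof (cases "(2::'a) = 0")
  case True
  then show ?thesis using card_vecs_le_glue_params_frame2_char_2[OF a True m] by (simp add: card_vecs)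
next
  case False
  have "CARD('a) ^ (m - 1) \<le> CARD('a) ^ m"
    using card_field_ge_2[where 'a = 'a] by (intro power_increasing) auto
  then show ?thesis using card_vecs_le_glue_params_frame2[OF a False, of m] by (simp add: card_vecs)
qed

definition frame4 :: "'a::field \<Rightarrow> 'a \<Rightarrow> nat \<Rightarrow> nat \<Rightarrow> 'a" where
  "frame4 b c = (\<lambda>j k. if j = 0 then (if k = 0 then 1 else if k = 1 then b else if k = 2 then c else 0)
     else (if k = 1 then c else if k = 2 then - b else if k = 3 then 1 else 0))"

lemma frame4_simps:
  "frame4 b c 0 0 = 1" "frame4 b c 0 1 = b" "frame4 b c 0 2 = c" "frame4 b c 0 3 = 0"
  "frame4 b c 1 0 = 0" "frame4 b c 1 1 = c" "frame4 b c 1 2 = - b" "frame4 b c 1 3 = 1"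
  unfolding frame4_def by simp_all

lemma gluing_frame4:
  fixes b c :: "'a::{finite,field}"
  assumes bc: "b * b + c * c = -1"
  shows "gluing 4 2 (frame4 b c)"
proof
  show "frame4 b c j \<in> vecs 4" for j unfolding frame4_def vecs_def by auto
next
  fix i j :: nat assume "i < 2" "j < 2"
  then have "i = 0 \<or> i = 1" "j = 0 \<or> j = 1" by auto
  moreover have "dot 4 (frame4 b c 0) (frame4 b c 0) = 0" "dot 4 (frame4 b c 1) (frame4 b c 1) = 0"
    unfolding dot_4 frame4_simps using bc by algebra+
  moreover have "dot 4 (frame4 b c 0) (frame4 b c 1) = 0" "dot 4 (frame4 b c 1) (frame4 b c 0) = 0"
    unfolding dot_4 frame4_simps by algebra+
  ultimately show "dot 4 (frame4 b c i) (frame4 b c j) = 0" by auto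
next
  fix r :: "nat \<Rightarrow> 'a" assume r: "r \<in> vecs 4" and orth: "\<forall>j<2. dot 4 r (frame4 b c j) = 0"
  have o0: "r 0 + r 1 * b + r 2 * c = 0" using orth[rule_format, of 0] unfolding dot_4 frame4_simps by simp
  have o1: "r 1 * c - r 2 * b + r 3 = 0" using orth[rule_format, of 1] unfolding dot_4 frame4_simps by simp
  have r1: "r 1 = r 0 * b + r 3 * c" and r2: "r 2 = r 0 * c + r 3 * (- b)"
    using o0 o1 bc by algebra+
  have r_eq: "r k = r 0 * frame4 b c 0 k + r 3 * frame4 b c 1 k" for k
  proof -
    consider "k = 0" | "k = 1" | "k = 2" | "k = 3" | "4 \<le> k" by linarith
    then show ?thesis
      by cases (use r1 r2 r in \<open>simp_all add: frame4_def vecsD\<close>)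
  qed
  show "\<exists>\<beta>. r = (\<lambda>k. \<Sum>j<2. \<beta> j * frame4 b c j k)"
  proof (intro exI[of _ "\<lambda>j. if j = 0 then r 0 else r 3"] ext)
    fix k show "r k = (\<Sum>j<2. (if j = 0 then r 0 else r 3) * frame4 b c j k)"
      using r_eq[of k] by (simp add: numeral_2_eq_2)
  qed
qed

lemma card_glue_params_frame4:
  fixes b c :: "'a::{finite,field}"
  assumes bc: "b * b + c * c = -1" and two: "(2::'a) \<noteq> 0"
  shows "CARD('a) ^ (2 * m) \<le> card (gluing.glue_params m 4 2 (frame4 b c))"
proof -
  interpret gluing m 4 2 "frame4 b c" by (rule gluing_frame4[OF bc])
  txt \<open>Any \<open>Y 0, Y 1\<close> extend, with \<open>R 0 = e\<^sub>0 + x u\<^sub>0 + y u\<^sub>1\<close> and \<open>R 1 = e\<^sub>3 + z u\<^sub>1\<close>, where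
    \<open>x, y, z\<close> solve the quadratic conditions.\<close>
  define R0 where "R0 = (\<lambda>y1 y2::nat \<Rightarrow> 'a. let x = - (1 + dot m y1 y1) / 2; y = - dot m y1 y2 in
     (\<lambda>k::nat. if k = 0 then 1 + x else if k = 1 then x * b + y * c else if k = 2 then x * c - y * b
        else if k = 3 then y else 0))"
  define R1 where "R1 = (\<lambda>y2::nat \<Rightarrow> 'a. let z = - (1 + dot m y2 y2) / 2 in
     (\<lambda>k::nat. if k = 1 then z * c else if k = 2 then - (z * b) else if k = 3 then 1 + z else 0))"
  define F where "F = (\<lambda>(y1::nat \<Rightarrow> 'a, y2::nat \<Rightarrow> 'a).
     ((\<lambda>i\<in>{..<2::nat}. if i = 0 then y1 else y2), (\<lambda>i\<in>{..<2::nat}. if i = 0 then R0 y1 y2 else R1 y2)))"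
  have "inj_on F (vecs m \<times> vecs m)"
  proof (rule inj_onI, clarify)
    fix y1 y2 y1' y2' :: "nat \<Rightarrow> 'a"
    assume e: "F (y1, y2) = F (y1', y2')"
    have "y1 = y1'" using fun_cong[OF arg_cong[where f = fst, OF e], of 0] unfolding F_def by simp
    moreover have "y2 = y2'" using fun_cong[OF arg_cong[where f = fst, OF e], of 1] unfolding F_def by simp
    ultimately show "y1 = y1' \<and> y2 = y2'" by simp
  qed
  moreover have "F ` (vecs m \<times> vecs m) \<subseteq> glue_params"
  proof (rule image_subsetI, clarify)
    fix y1 y2 :: "nat \<Rightarrow> 'a" assume y1: "y1 \<in> vecs m" and y2: "y2 \<in> vecs m"
    define x where "x = - (1 + dot m y1 y1) / 2"
    define y where "y = - dot m y1 y2"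
    define z where "z = - (1 + dot m y2 y2) / 2"
    have R0e: "R0 y1 y2 0 = 1 + x" "R0 y1 y2 1 = x * b + y * c" "R0 y1 y2 2 = x * c - y * b" "R0 y1 y2 3 = y"
      unfolding R0_def x_def y_def Let_def by simp_all
    have R1e: "R1 y2 0 = 0" "R1 y2 1 = z * c" "R1 y2 2 = - (z * b)" "R1 y2 3 = 1 + z"
      unfolding R1_def z_def Let_def by simp_all
    have R0v: "R0 y1 y2 \<in> vecs 4" unfolding R0_def Let_def vecs_def by auto
    have R1v: "R1 y2 \<in> vecs 4" unfolding R1_def Let_def vecs_def by auto
    have x2: "2 * x = - (1 + dot m y1 y1)" unfolding x_def using two by simp
    have z2: "2 * z = - (1 + dot m y2 y2)" unfolding z_def using two by simp
    have a1: "dot 4 (R0 y1 y2) (frame4 b c 0) = 1" unfolding dot_4 R0e frame4_simps using bc by algebra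
    have a2: "dot 4 (R0 y1 y2) (frame4 b c 1) = 0" unfolding dot_4 R0e frame4_simps using bc by algebra
    have a3: "dot 4 (R1 y2) (frame4 b c 0) = 0" unfolding dot_4 R1e frame4_simps by algebra
    have a4: "dot 4 (R1 y2) (frame4 b c 1) = 1" unfolding dot_4 R1e frame4_simps using bc by algebra
    have b1: "dot m y1 y1 + dot 4 (R0 y1 y2) (R0 y1 y2) = 0" unfolding dot_4 R0e using bc x2 by algebra
    have b2: "dot m y2 y2 + dot 4 (R1 y2) (R1 y2) = 0" unfolding dot_4 R1e using bc z2 by algebra
    have b3: "dot m y1 y2 + dot 4 (R0 y1 y2) (R1 y2) = 0" unfolding dot_4 R0e R1e using bc y_def by algebra
    have b4: "dot m y2 y1 + dot 4 (R1 y2) (R0 y1 y2) = 0" using b3 by (simp add: dot_commute)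
    have lt2: "\<And>i::nat. i < 2 \<longleftrightarrow> i = 0 \<or> i = 1" by auto
    show "F (y1, y2) \<in> glue_params" unfolding glue_params_def F_def
      using y1 y2 R0v R1v a1 a2 a3 a4 b1 b2 b3 b4 by (auto simp: lt2)
  qed
  ultimately have "card (vecs m \<times> vecs m :: ((nat \<Rightarrow> 'a) \<times> (nat \<Rightarrow> 'a)) set) \<le> card glue_params"
    using card_inj_on_le finite_glue_params by blast
  then show ?thesis
    by (simp add: card_cartesian_product card_vecs power_mult_distrib power_add mult_2)
qed

lemma sum_two_squares_eq_neg_one: "\<exists>b c::'a::{finite,field}. b * b + c * c = -1"
proof -
  let ?A = "(\<lambda>x::'a. x * x) ` UNIV" and ?B = "(\<lambda>y::'a. - 1 - y * y) ` UNIV"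
  txt \<open>Each nonzero square has at most two square roots, so there are at least \<open>(q + 1) / 2\<close> squares;
    the same holds for \<open>?B\<close>, hence the two sets meet.\<close>
  have fiber: "card {x \<in> UNIV - {0}. x * x = v} \<le> 2" if v: "v \<in> (\<lambda>x::'a. x * x) ` (UNIV - {0})" for v
  proof -
    obtain x0 where x0: "x0 * x0 = v" using v by auto
    have "{x \<in> UNIV - {0}. x * x = v} \<subseteq> {x0, - x0}"
    proof
      fix x assume "x \<in> {x \<in> UNIV - {0}. x * x = v}"
      then have "(x - x0) * (x + x0) = 0" using x0 by (simp add: algebra_simps)
      then show "x \<in> {x0, - x0}" by (auto simp: eq_neg_iff_add_eq_0)
    qed
    then have "card {x \<in> UNIV - {0}. x * x = v} \<le> card {x0, - x0}" by (intro card_mono) auto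
    also have "\<dots> \<le> 2" by (simp add: card_insert_if)
    finally show ?thesis .
  qed
  have "card (UNIV - {0::'a}) \<le> 2 * card ((\<lambda>x::'a. x * x) ` (UNIV - {0}))"
    by (rule card_le_mult_card_image[OF _ fiber]) simp
  moreover have "(\<lambda>x::'a. x * x) ` (UNIV - {0}) = ?A - {0}" by auto
  ultimately have "CARD('a) - 1 \<le> 2 * (card ?A - 1)" by (simp add: card_Diff_singleton)
  then have A: "CARD('a) + 1 \<le> 2 * card ?A"
    using card_field_ge_2[where 'a = 'a] by (cases "card ?A") auto
  have "?B = (\<lambda>v. - 1 - v) ` ?A" by auto
  moreover have "inj_on (\<lambda>v::'a. - 1 - v) ?A" by (rule inj_onI) simp
  ultimately have B: "card ?B = card ?A" by (simp add: card_image)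
  show ?thesis
  proof (rule ccontr)
    assume "\<not> ?thesis"
    then have "?A \<inter> ?B = {}" by (auto simp: algebra_simps eq_diff_eq)
    then have "card (?A \<union> ?B) = card ?A + card ?B" by (intro card_Un_disjoint) auto
    moreover have "card (?A \<union> ?B) \<le> CARD('a)" by (rule card_mono) auto
    ultimately show False using A B by simp
  qed
qed

lemma no_self_dual_length_2:
  assumes "\<nexists>a::'a::{finite,field}. a * a = -1"
  shows "num_sd TYPE('a) 2 = 0"
proof -
  have False if M: "self_dual 2 (M :: (nat \<Rightarrow> 'a) set)" for M
  proof -
    have "card M = CARD('a)" using self_dual_even_card(2)[OF M] by simp
    then have "\<not> M \<subseteq> {\<lambda>_. 0}"
      using card_field_ge_2[where 'a = 'a] card_mono[of "{\<lambda>_. 0}" M] by auto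
    then obtain x where x: "x \<in> M" "x \<noteq> (\<lambda>_. 0)" by auto
    have xx: "x 0 * x 0 + x 1 * x 1 = 0" using self_dual_orth[OF M x(1) x(1)] unfolding dot_2 .
    have xv: "x \<in> vecs 2" using x(1) M unfolding self_dual_def is_code_def by auto
    show False
    proof (cases "x 0 = 0")
      case True
      then have "x k = 0" for k
        using xx xv by (cases "k = 0"; cases "k = 1") (auto simp: vecsD)
      then show False using x(2) by auto
    next
      case False
      have "(x 1 / x 0) * (x 1 / x 0) = -1"
        using xx False by (simp add: field_simps eq_neg_iff_add_eq_0 add.commute)
      then show False using assms by blast
    qed
  qed
  then have "{M :: (nat \<Rightarrow> 'a) set. self_dual 2 M} = {}" by blast
  then show ?thesis unfolding num_sd_def by (simp only: card.empty)
qed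

section \<open>Growth of the number of self-dual codes\<close>

lemma num_sd_odd: "odd n \<Longrightarrow> num_sd TYPE('a::{finite,field}) n = 0"
  unfolding num_sd_def using self_dual_even_card(1) by (metis (no_types) card.empty empty_Collect_eq)

lemma num_sd_le: "num_sd TYPE('a::{finite,field}) (2 * k) \<le> 4 ^ k * CARD('a) ^ (k * k + k)"
proof -
  have "{C :: (nat \<Rightarrow> 'a) set. self_dual (2 * k) C} \<subseteq> codes_of_dim (2 * k) k"
  proof
    fix C assume "C \<in> {C :: (nat \<Rightarrow> 'a) set. self_dual (2 * k) C}"
    then have C: "self_dual (2 * k) C" by simp
    show "C \<in> codes_of_dim (2 * k) k"
      using self_dual_even_card(2)[OF C] C by (simp add: codes_of_dim_def self_dual_def)
  qed
  then have "num_sd TYPE('a) (2 * k) * CARD('a) ^ (k * k)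
      \<le> card (codes_of_dim (2 * k) k :: (nat \<Rightarrow> 'a) set set) * CARD('a) ^ (k * k)"
    unfolding num_sd_def by (intro mult_right_mono card_mono finite_codes_of_dim) auto
  also have "\<dots> \<le> 2 ^ (2 * k) * CARD('a) ^ (k * (2 * k) + k)"
    by (rule card_codes_of_dim_le)
  also have "\<dots> = (4 ^ k * CARD('a) ^ (k * k + k)) * CARD('a) ^ (k * k)"
  proof -
    have "(2::nat) ^ (2 * k) = 4 ^ k" by (simp add: power_mult)
    moreover have "k * (2 * k) + k = (k * k + k) + k * k" by (simp add: algebra_simps)
    ultimately show ?thesis by (simp only: power_add mult.assoc)
  qed
  finally show ?thesis using card_field_ge_2[where 'a = 'a] by simp
qed

lemma num_sd_step_2:
  fixes a :: "'a::{finite,field}"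
  assumes a: "a * a = -1" and j: "1 \<le> j"
  shows "num_sd TYPE('a) (2 * j) * CARD('a) ^ (j - 1) \<le> num_sd TYPE('a) (2 * j + 2)"
proof -
  interpret gluing "2 * j" 2 1 "frame2 a" by (rule gluing_frame2[OF a])
  have "j - 1 + j = 2 * j - 1" using j by simp
  then have "num_sd TYPE('a) (2 * j) * CARD('a) ^ (j - 1) * CARD('a) ^ j
      = num_sd TYPE('a) (2 * j) * CARD('a) ^ (2 * j - 1)"
    by (metis mult.assoc power_add)
  also have "\<dots> \<le> num_sd TYPE('a) (2 * j) * card glue_params"
    using card_glue_params_frame2[OF a, of "2 * j"] j by simp
  also have "\<dots> \<le> num_sd TYPE('a) (2 * j + 2) * CARD('a) ^ j"
    using card_glue_params_le by simp
  finally show ?thesis using card_field_ge_2[where 'a = 'a] by simp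
qed

lemma num_sd_step_4:
  assumes two: "(2::'a::{finite,field}) \<noteq> 0" and m: "even m"
  shows "num_sd TYPE('a) m * CARD('a) ^ m \<le> num_sd TYPE('a) (m + 4)"
proof -
  obtain b c :: 'a where bc: "b * b + c * c = -1" using sum_two_squares_eq_neg_one by blast
  interpret gluing m 4 2 "frame4 b c" by (rule gluing_frame4[OF bc])
  have "num_sd TYPE('a) m * CARD('a) ^ m * CARD('a) ^ m = num_sd TYPE('a) m * CARD('a) ^ (2 * m)"
    by (simp add: power_add[symmetric] mult_2 mult.assoc)
  also have "\<dots> \<le> num_sd TYPE('a) m * card glue_params"
    using card_glue_params_frame4[OF bc two, of m] by simp
  also have "\<dots> \<le> num_sd TYPE('a) (m + 4) * CARD('a) ^ m"
    using card_glue_params_le m by (simp add: power_mult[symmetric])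
  finally show ?thesis using card_field_ge_2[where 'a = 'a] by simp
qed

lemma num_sd_nonzero_shorten_4:
  assumes "num_sd TYPE('a::{finite,field}) (m + 4) \<noteq> 0"
  shows "num_sd TYPE('a) m \<noteq> 0"
proof -
  obtain b c :: 'a where bc: "b * b + c * c = -1" using sum_two_squares_eq_neg_one by blast
  interpret gluing m 4 2 "frame4 b c" by (rule gluing_frame4[OF bc])
  have "{L :: (nat \<Rightarrow> 'a) set. self_dual (m + 4) L} \<noteq> {}"
    using assms unfolding num_sd_def by (metis card.empty)
  then obtain L :: "(nat \<Rightarrow> 'a) set" where "self_dual (m + 4) L" by blast
  then have "self_dual m (unglue L)" by (rule self_dual_unglue)
  then show ?thesis
    unfolding num_sd_def using finite_self_dual_codes[of m, where 'a = 'a] by auto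
qed

lemma num_sd_4j_2:
  assumes "\<nexists>a::'a::{finite,field}. a * a = -1"
  shows "num_sd TYPE('a) (4 * j + 2) = 0"
proof (induction j)
  case 0
  then show ?case using no_self_dual_length_2[OF assms] by (simp add: numeral_2_eq_2)
next
  case (Suc j)
  have "4 * Suc j + 2 = (4 * j + 2) + 4" by simp
  then show ?case using num_sd_nonzero_shorten_4[of "4 * j + 2", where 'a = 'a] Suc by metis
qed

lemma num_sd_iterate_2:
  fixes a :: "'a::{finite,field}"
  assumes a: "a * a = -1" and k: "1 \<le> k"
  shows "num_sd TYPE('a) (2 * k) * CARD('a) ^ (\<Sum>j<i. k + j - 1) \<le> num_sd TYPE('a) (2 * (k + i))"
proof (induction i)
  case (Suc i)
  have "num_sd TYPE('a) (2 * k) * CARD('a) ^ (\<Sum>j<Suc i. k + j - 1)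
      = num_sd TYPE('a) (2 * k) * CARD('a) ^ (\<Sum>j<i. k + j - 1) * CARD('a) ^ (k + i - 1)"
    by (simp add: power_add algebra_simps)
  also have "\<dots> \<le> num_sd TYPE('a) (2 * (k + i)) * CARD('a) ^ (k + i - 1)"
    using Suc by simp
  also have "\<dots> \<le> num_sd TYPE('a) (2 * (k + Suc i))"
    using num_sd_step_2[OF a, of "k + i"] k by simp
  finally show ?case .
qed simp

lemma num_sd_iterate_4:
  assumes two: "(2::'a::{finite,field}) \<noteq> 0"
  shows "num_sd TYPE('a) (2 * k) * CARD('a) ^ (\<Sum>l<i. 2 * k + 4 * l) \<le> num_sd TYPE('a) (2 * (k + 2 * i))"
proof (induction i)
  case (Suc i)
  have "num_sd TYPE('a) (2 * k) * CARD('a) ^ (\<Sum>l<Suc i. 2 * k + 4 * l)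
      = num_sd TYPE('a) (2 * k) * CARD('a) ^ (\<Sum>l<i. 2 * k + 4 * l) * CARD('a) ^ (2 * (k + 2 * i))"
    by (simp add: power_add algebra_simps)
  also have "\<dots> \<le> num_sd TYPE('a) (2 * (k + 2 * i)) * CARD('a) ^ (2 * (k + 2 * i))"
    using Suc by simp
  also have "\<dots> \<le> num_sd TYPE('a) (2 * (k + 2 * i) + 4)"
    using num_sd_step_4[OF two, of "2 * (k + 2 * i)"] by simp
  also have "2 * (k + 2 * i) + 4 = 2 * (k + 2 * Suc i)" by simp
  finally show ?case .
qed simp

lemma double_sum_lessThan: "2 * (\<Sum>j<n. j) = n * (n - 1 :: nat)"
proof (induction n)
  case (Suc n) then show ?case by (cases n) (auto simp: algebra_simps)
qed simp

lemma num_sd_gluing_bound_sqrt: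
  fixes a :: "'a::{finite,field}"
  assumes a: "a * a = -1" and k1: "1 \<le> k1" "k1 \<le> k2"
  shows "num_sd TYPE('a) (2 * k2) * CARD('a) ^ (k1 * k2 + (\<Sum>j<k1. j))
    \<le> num_sd TYPE('a) (2 * (k1 + k2)) * CARD('a) ^ k1"
proof -
  have "(\<Sum>j<k1. k2 + j) = (\<Sum>j<k1. (k2 + j - 1) + 1)"
    using k1 by (intro sum.cong) auto
  also have "\<dots> = (\<Sum>j<k1. k2 + j - 1) + k1"
    by (simp only: sum.distrib) simp
  finally have "(\<Sum>j<k1. k2 + j - 1) + k1 = k1 * k2 + (\<Sum>j<k1. j)"
    by (simp add: sum.distrib)
  then have "num_sd TYPE('a) (2 * k2) * CARD('a) ^ (k1 * k2 + (\<Sum>j<k1. j))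
      = num_sd TYPE('a) (2 * k2) * CARD('a) ^ (\<Sum>j<k1. k2 + j - 1) * CARD('a) ^ k1"
    by (simp add: power_add[symmetric])
  also have "\<dots> \<le> num_sd TYPE('a) (2 * (k1 + k2)) * CARD('a) ^ k1"
    using num_sd_iterate_2[OF a, of k2 k1] k1 by (simp add: add.commute)
  finally show ?thesis .
qed

text \<open>Without a square root of \<open>-1\<close>, self-dual codes of length \<open>2 k\<^sub>1\<close> exist only for even \<open>k\<^sub>1\<close>,
  and the frame of length 4 is glued \<open>k\<^sub>1 / 2\<close> times.\<close>

lemma num_sd_gluing_bound_no_sqrt:
  assumes no_sqrt: "\<nexists>a::'a::{finite,field}. a * a = -1"
    and ne: "num_sd TYPE('a) (2 * k1) \<noteq> 0"
  shows "num_sd TYPE('a) (2 * k2) * CARD('a) ^ (k1 * k2 + (\<Sum>j<k1. j))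
    \<le> num_sd TYPE('a) (2 * (k1 + k2)) * CARD('a) ^ k1"
proof -
  have two: "(2::'a) \<noteq> 0"
  proof
    assume "(2::'a) = 0"
    then have "(1::'a) * 1 = -1" by (metis add_eq_0_iff mult_1 one_add_one)
    then show False using no_sqrt by blast
  qed
  have "even k1"
  proof (rule ccontr)
    assume "odd k1"
    then obtain j where "k1 = 2 * j + 1" by (rule oddE)
    then have "2 * k1 = 4 * j + 2" by simp
    then show False using ne num_sd_4j_2[OF no_sqrt, of j] by simp
  qed
  then obtain i where i: "k1 = 2 * i" by blast
  have T1: "2 * (\<Sum>j<k1. j) = k1 * (k1 - 1)" and T2: "2 * (\<Sum>l<i. l) = i * (i - 1)"
    by (rule double_sum_lessThan)+
  have E: "(\<Sum>l<i. 2 * k2 + 4 * l) = 2 * i * k2 + 4 * (\<Sum>l<i. l)"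
    by (simp add: sum.distrib sum_distrib_left[symmetric])
  have "2 * (k1 * k2 + (\<Sum>j<k1. j)) = 4 * i * k2 + 2 * i * (2 * i - 1)"
    using T1 i by simp
  also have "\<dots> \<le> 4 * i * k2 + 4 * (i * (i - 1)) + 4 * i"
    by (cases i) (auto simp: algebra_simps)
  also have "\<dots> = 2 * ((\<Sum>l<i. 2 * k2 + 4 * l) + k1)"
    using E T2 i by simp
  finally have "k1 * k2 + (\<Sum>j<k1. j) \<le> (\<Sum>l<i. 2 * k2 + 4 * l) + k1" by simp
  then have "num_sd TYPE('a) (2 * k2) * CARD('a) ^ (k1 * k2 + (\<Sum>j<k1. j))
      \<le> num_sd TYPE('a) (2 * k2) * CARD('a) ^ ((\<Sum>l<i. 2 * k2 + 4 * l) + k1)"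
    using card_field_ge_2[where 'a = 'a] by (intro mult_le_mono2 power_increasing) auto
  also have "\<dots> = num_sd TYPE('a) (2 * k2) * CARD('a) ^ (\<Sum>l<i. 2 * k2 + 4 * l) * CARD('a) ^ k1"
    by (simp add: power_add algebra_simps)
  also have "\<dots> \<le> num_sd TYPE('a) (2 * (k1 + k2)) * CARD('a) ^ k1"
    using num_sd_iterate_4[OF two, of k2 i] i by (simp add: add.commute)
  finally show ?thesis .
qed

lemma num_sd_gluing_bound:
  assumes "1 \<le> k1" "k1 \<le> k2" and "num_sd TYPE('a::{finite,field}) (2 * k1) \<noteq> 0"
  shows "num_sd TYPE('a) (2 * k2) * CARD('a) ^ (k1 * k2 + (\<Sum>j<k1. j))
    \<le> num_sd TYPE('a) (2 * (k1 + k2)) * CARD('a) ^ k1"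
  using assms num_sd_gluing_bound_sqrt num_sd_gluing_bound_no_sqrt by blast

section \<open>Asymptotics\<close>

text \<open>\<open>g n\<close> stands for the number of self-dual codes of length \<open>n\<close>, and \<open>q\<close> for the field size.\<close>

locale sd_growth =
  fixes g :: "nat \<Rightarrow> real" and q :: real
  assumes q_ge_2: "2 \<le> q"
    and g_nonneg: "0 \<le> g n"
    and g_odd: "odd n \<Longrightarrow> g n = 0"
    and g_le: "g (2 * k) \<le> 4 ^ k * q ^ (k * k + k)"
    and g_gluing: "1 \<le> k1 \<Longrightarrow> k1 \<le> k2 \<Longrightarrow> g (2 * k1) \<noteq> 0 \<Longrightarrow>
      g (2 * k2) * q ^ (k1 * k2 + (\<Sum>j<k1. j)) \<le> g (2 * (k1 + k2)) * q ^ k1"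
begin

definition decay :: "nat \<Rightarrow> real" where
  "decay k = 16 * real k ^ 2 * q ^ 3 / q ^ (k div 4)"

lemma decay_nonneg: "0 \<le> decay k"
  using q_ge_2 unfolding decay_def by simp

lemma exponent_ineq:
  fixes k1 k :: nat
  assumes k1: "1 \<le> k1" and k: "2 * k1 \<le> k"
  shows "k1 * k1 + 2 * k1 + (k div 4) * k1 \<le> 3 * k1 + (k1 * (k - k1) + (\<Sum>j<k1. j))"
proof -
  have T: "2 * (\<Sum>j<k1. j) + k1 = k1 * k1"
    using double_sum_lessThan[of k1] k1 by (cases k1) auto
  have "k1 + 2 * (k div 4) \<le> 1 + 2 * (k - k1)" using k by simp
  then have "k1 * (k1 + 2 * (k div 4)) \<le> k1 * (1 + 2 * (k - k1))" by (rule mult_le_mono2)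
  then show ?thesis using T by (simp add: algebra_simps)
qed

lemma split_product_le:
  assumes k1: "1 \<le> k1" and k: "2 * k1 \<le> k"
  shows "g (2 * k1) * g (2 * k - 2 * k1) * q ^ (k div 4 * k1) \<le> 4 ^ k1 * g (2 * k) * q ^ (3 * k1)"
proof (cases "g (2 * k1) = 0")
  case True
  then show ?thesis using g_nonneg q_ge_2 by simp
next
  case False
  define k2 where "k2 = k - k1"
  define E where "E = k1 * k2 + (\<Sum>j<k1. j)"
  have q0: "0 < q" using q_ge_2 by simp
  have k2: "k1 \<le> k2" "k1 + k2 = k" "2 * k - 2 * k1 = 2 * k2" unfolding k2_def using k by auto
  have "g (2 * k1) * g (2 * k2) * q ^ E \<le> g (2 * k1) * (g (2 * k) * q ^ k1)"
    using g_gluing[OF k1 k2(1) False] g_nonneg[of "2 * k1"] k2(2)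
    by (simp add: E_def mult.assoc mult_left_mono)
  also have "\<dots> \<le> (4 ^ k1 * q ^ (k1 * k1 + k1)) * (g (2 * k) * q ^ k1)"
    using g_le[of k1] g_nonneg q0 by (intro mult_right_mono) auto
  also have "\<dots> = 4 ^ k1 * g (2 * k) * q ^ (k1 * k1 + 2 * k1)"
  proof -
    have "k1 * k1 + 2 * k1 = (k1 * k1 + k1) + k1" by simp
    then show ?thesis by (simp only: power_add) (simp add: algebra_simps)
  qed
  finally have A: "g (2 * k1) * g (2 * k2) * q ^ E \<le> 4 ^ k1 * g (2 * k) * q ^ (k1 * k1 + 2 * k1)" .
  have B: "q ^ (k1 * k1 + 2 * k1) * q ^ (k div 4 * k1) \<le> q ^ (3 * k1) * q ^ E"
    unfolding power_add[symmetric] using q_ge_2 exponent_ineq[OF k1 k]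
    by (intro power_increasing) (auto simp: E_def k2_def)
  have "g (2 * k1) * g (2 * k2) * q ^ E * q ^ (k div 4 * k1)
      \<le> 4 ^ k1 * g (2 * k) * q ^ (k1 * k1 + 2 * k1) * q ^ (k div 4 * k1)"
    using A q0 by (intro mult_right_mono) auto
  also have "\<dots> \<le> 4 ^ k1 * g (2 * k) * (q ^ (3 * k1) * q ^ E)"
    using B g_nonneg[of "2 * k"] by (simp add: mult.assoc mult_left_mono)
  finally show ?thesis
    using q0 k2(3) by (simp add: algebra_simps)
qed

lemma split_term_le:
  assumes k1: "1 \<le> k1" and k: "2 * k1 \<le> k"
  shows "real (2 * k choose (2 * k1)) * (g (2 * k1) * g (2 * k - 2 * k1)) \<le> g (2 * k) * decay k ^ k1"
proof -
  define D where "D = k div 4"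
  have q0: "0 < q" using q_ge_2 by simp
  have "2 * k choose (2 * k1) \<le> (2 * k) ^ (2 * k1)"
    by (rule binomial_le_pow) (use k in simp)
  then have "real (2 * k choose (2 * k1)) \<le> (2 * real k) ^ (2 * k1)"
    by (metis of_nat_le_iff of_nat_mult of_nat_numeral of_nat_power)
  then have "real (2 * k choose (2 * k1)) * (g (2 * k1) * g (2 * k - 2 * k1))
      \<le> (2 * real k) ^ (2 * k1) * (g (2 * k1) * g (2 * k - 2 * k1))"
    using g_nonneg by (intro mult_right_mono) auto
  also have "\<dots> \<le> (2 * real k) ^ (2 * k1) * (4 ^ k1 * g (2 * k) * q ^ (3 * k1) / q ^ (D * k1))"
    using split_product_le[OF k1 k] q0 unfolding D_def by (intro mult_left_mono) (auto simp: field_simps)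
  also have "\<dots> = g (2 * k) * ((2 * real k) ^ 2 * 4 * q ^ 3 / q ^ D) ^ k1"
  proof -
    have p1: "(2 * real k) ^ (2 * k1) = ((2 * real k) ^ 2) ^ k1" by (simp add: power_mult)
    have p2: "q ^ (3 * k1) = (q ^ 3) ^ k1" by (simp add: power_mult)
    have p3: "q ^ (D * k1) = (q ^ D) ^ k1" by (simp add: power_mult mult.commute)
    have p4: "((2 * real k) ^ 2 * 4 * q ^ 3 / q ^ D) ^ k1
        = ((2 * real k) ^ 2) ^ k1 * 4 ^ k1 * (q ^ 3) ^ k1 / (q ^ D) ^ k1"
      by (simp only: power_mult_distrib power_divide)
    show ?thesis unfolding p1 p2 p3 p4 by simp
  qed
  also have "(2 * real k) ^ 2 * 4 * q ^ 3 / q ^ D = decay k"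
    unfolding decay_def D_def by (simp add: power2_eq_square)
  finally show ?thesis .
qed

lemma split_term_le_sym:
  assumes k1: "k1 \<in> {1..<k}"
  shows "real (2 * k choose (2 * k1)) * (g (2 * k1) * g (2 * k - 2 * k1))
    \<le> g (2 * k) * (decay k ^ k1 + decay k ^ (k - k1))"
proof (cases "2 * k1 \<le> k")
  case True
  then have "real (2 * k choose (2 * k1)) * (g (2 * k1) * g (2 * k - 2 * k1)) \<le> g (2 * k) * decay k ^ k1"
    using split_term_le k1 by auto
  also have "\<dots> \<le> g (2 * k) * (decay k ^ k1 + decay k ^ (k - k1))"
    using decay_nonneg g_nonneg by (intro mult_left_mono) auto
  finally show ?thesis .
next
  case False
  define k1' where "k1' = k - k1"
  have k1': "1 \<le> k1'" "2 * k1' \<le> k" "2 * k - 2 * k1' = 2 * k1" "2 * k - 2 * k1 = 2 * k1'"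
    using k1 False unfolding k1'_def by auto
  have "2 * k choose (2 * k1) = 2 * k choose (2 * k1')"
    using binomial_symmetric[of "2 * k1" "2 * k"] k1 unfolding k1'_def by (simp add: diff_mult_distrib2)
  then have "real (2 * k choose (2 * k1)) * (g (2 * k1) * g (2 * k - 2 * k1)) \<le> g (2 * k) * decay k ^ k1'"
    using split_term_le[OF k1'(1,2)] k1'(3,4) by (simp add: mult.commute)
  also have "\<dots> \<le> g (2 * k) * (decay k ^ k1 + decay k ^ (k - k1))"
    using decay_nonneg g_nonneg unfolding k1'_def by (intro mult_left_mono) auto
  finally show ?thesis .
qed

end

lemma sum_even_indices:
  fixes f :: "nat \<Rightarrow> real"
  assumes "\<And>n. odd n \<Longrightarrow> f n = 0"
  shows "(\<Sum>n\<in>{1..<2 * k}. f n) = (\<Sum>j\<in>{1..<k}. f (2 * j))"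
proof -
  have "(\<Sum>n\<in>{1..<2 * k}. f n) = (\<Sum>n\<in>(\<lambda>j. 2 * j) ` {1..<k}. f n)"
  proof (rule sum.mono_neutral_right)
    show "\<forall>n\<in>{1..<2 * k} - (\<lambda>j. 2 * j) ` {1..<k}. f n = 0"
    proof
      fix n assume n: "n \<in> {1..<2 * k} - (\<lambda>j. 2 * j) ` {1..<k}"
      have "odd n"
      proof
        assume "even n"
        then obtain j where "n = 2 * j" by blast
        then show False using n by auto
      qed
      then show "f n = 0" by (rule assms)
    qed
  qed auto
  also have "\<dots> = (\<Sum>j\<in>{1..<k}. f (2 * j))"
    by (subst sum.reindex) (auto simp: inj_on_def)
  finally show ?thesis .
qed

lemma sum_power_le_twice:
  fixes y :: real
  assumes y0: "0 \<le> y" and y1: "y \<le> 1 / 2"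
  shows "(\<Sum>j\<in>{1..<k}. y ^ j) \<le> 2 * y"
proof (cases k)
  case 0
  then show ?thesis using y0 by simp
next
  case (Suc k')
  have S0: "0 \<le> (\<Sum>j\<in>{1..<k}. y ^ j)" using y0 by (intro sum_nonneg) auto
  have "(\<Sum>i<k. y ^ i) = 1 + (\<Sum>j\<in>{1..<k}. y ^ j)"
    using Suc by (simp add: lessThan_atLeast0 sum.atLeast_Suc_lessThan)
  then have "(1 - y) * (1 + (\<Sum>j\<in>{1..<k}. y ^ j)) = 1 - y ^ k"
    using one_diff_power_eq[of y k] by simp
  moreover have "0 \<le> y ^ k" using y0 by simp
  ultimately have "(1 - y) * (1 + (\<Sum>j\<in>{1..<k}. y ^ j)) \<le> 1" by linarith
  then have "(\<Sum>j\<in>{1..<k}. y ^ j) - y * (\<Sum>j\<in>{1..<k}. y ^ j) \<le> y"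
    by (simp add: algebra_simps)
  moreover have "y * (\<Sum>j\<in>{1..<k}. y ^ j) \<le> (1 / 2) * (\<Sum>j\<in>{1..<k}. y ^ j)"
    using y1 S0 by (rule mult_right_mono)
  ultimately show ?thesis by simp
qed

context sd_growth
begin

lemma sum_split_terms_le:
  assumes y: "decay k \<le> 1 / 2"
  shows "(\<Sum>n\<in>{1..<2 * k}. real (2 * k choose n) * (g n * g (2 * k - n))) \<le> 4 * decay k * g (2 * k)"
proof -
  have "(\<Sum>n\<in>{1..<2 * k}. real (2 * k choose n) * (g n * g (2 * k - n)))
      = (\<Sum>j\<in>{1..<k}. real (2 * k choose (2 * j)) * (g (2 * j) * g (2 * k - 2 * j)))"
    by (rule sum_even_indices) (simp add: g_odd)
  also have "\<dots> \<le> (\<Sum>j\<in>{1..<k}. g (2 * k) * (decay k ^ j + decay k ^ (k - j)))"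
    by (rule sum_mono) (rule split_term_le_sym)
  also have "\<dots> = g (2 * k) * (2 * (\<Sum>j\<in>{1..<k}. decay k ^ j))"
    using sum.atLeastLessThan_rev[of "\<lambda>j. decay k ^ j" 1 k]
    by (simp add: sum.distrib sum_distrib_left[symmetric])
  also have "\<dots> \<le> g (2 * k) * (2 * (2 * decay k))"
    using sum_power_le_twice[OF decay_nonneg y] g_nonneg by (intro mult_left_mono) auto
  finally show ?thesis by (simp add: algebra_simps)
qed

lemma decay_le: "decay (n div 2) \<le> 32 * q ^ 3 * (real n ^ 2 / 2 powr (real n / 8))"
proof -
  define k where "k = n div 2"
  have k4: "k div 4 = n div 8" unfolding k_def by (simp add: div_mult2_eq)
  have "n < 8 * (n div 8) + 8" by simp
  then have "real n / 8 - 1 \<le> real (k div 4)" unfolding k4 by simp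
  then have "2 powr (real n / 8 - 1) \<le> 2 powr real (k div 4)" by (rule powr_mono) simp
  moreover have "2 powr (real n / 8 - 1) = 2 powr (real n / 8) / 2" by (simp add: powr_diff)
  moreover have "2 powr real (k div 4) = (2::real) ^ (k div 4)" by (simp add: powr_realpow)
  moreover have "(2::real) ^ (k div 4) \<le> q ^ (k div 4)" using q_ge_2 by (intro power_mono) auto
  ultimately have qk: "2 powr (real n / 8) / 2 \<le> q ^ (k div 4)" by simp
  have kn: "real k ^ 2 \<le> real n ^ 2" unfolding k_def by (intro power_mono) auto
  have q3: "0 \<le> q ^ 3" using q_ge_2 by simp
  have "decay k = 16 * real k ^ 2 * q ^ 3 / q ^ (k div 4)"
    unfolding decay_def ..
  also have "\<dots> \<le> 16 * real n ^ 2 * q ^ 3 / (2 powr (real n / 8) / 2)"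
    using kn q3 qk by (intro frac_le mult_right_mono mult_left_mono) auto
  also have "\<dots> = 32 * q ^ 3 * (real n ^ 2 / 2 powr (real n / 8))"
    by (simp add: field_simps)
  finally show ?thesis unfolding k_def .
qed

text \<open>The sandwich \<open>1 - v n \<le> (g n - D n) / g n \<le> 1\<close> with \<open>v n = 128 q\<^sup>3 n\<^sup>2 / 2\<^bsup>n/8\<^esup> \<longrightarrow> 0\<close>.\<close>

theorem ratio_tendsto_1:
  fixes D :: "nat \<Rightarrow> real"
  assumes D_nonneg: "\<And>n. 0 \<le> D n"
    and D_le: "\<And>n. D n \<le> (\<Sum>n1\<in>{1..<n}. real (n choose n1) * (g n1 * g (n - n1)))"
  shows "((\<lambda>n. (g n - D n) / g n) \<longlongrightarrow> 1) (inf sequentially (principal {n. even n \<and> g n \<noteq> 0}))"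
proof -
  let ?F = "inf sequentially (principal {n. even n \<and> g n \<noteq> 0})"
  define v where "v n = 128 * q ^ 3 * (real n ^ 2 / 2 powr (real n / 8))" for n
  have "(\<lambda>n::nat. real n ^ 2 / 2 powr (real n / 8)) \<longlonglongrightarrow> 0" by real_asymp
  then have v: "v \<longlonglongrightarrow> 0"
    unfolding v_def by (rule tendsto_mult_right_zero)
  have v2: "eventually (\<lambda>n. v n < 2) sequentially"
    using order_tendstoD(2)[OF v] by simp
  have bounds: "eventually (\<lambda>n. 1 - v n \<le> (g n - D n) / g n \<and> (g n - D n) / g n \<le> 1) ?F"
    unfolding eventually_inf_principal
  proof (rule eventually_mono[OF v2], intro impI)
    fix n :: nat assume vn: "v n < 2" and n: "n \<in> {n. even n \<and> g n \<noteq> 0}"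
    obtain k where k: "n = 2 * k" using n by blast
    have g_pos: "0 < g n" using n g_nonneg[of n] by auto
    have decay: "decay k \<le> v n / 4" using decay_le[of n] k unfolding v_def by simp
    have "decay k \<le> 1 / 2" using decay vn by simp
    have "D n \<le> (\<Sum>n1\<in>{1..<n}. real (n choose n1) * (g n1 * g (n - n1)))"
      by (rule D_le)
    also have "\<dots> \<le> 4 * decay k * g n"
      using sum_split_terms_le[OF \<open>decay k \<le> 1 / 2\<close>] unfolding k .
    also have "\<dots> \<le> v n * g n"
      using decay g_pos by (intro mult_right_mono) auto
    finally have "D n \<le> v n * g n" .
    then show "1 - v n \<le> (g n - D n) / g n \<and> (g n - D n) / g n \<le> 1"
      using D_nonneg[of n] g_pos by (simp add: field_simps)
  qed
  have lower: "((\<lambda>n. 1 - v n) \<longlongrightarrow> 1) ?F"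
    by (rule tendsto_mono[OF inf_le1]) (use tendsto_diff[OF tendsto_const v, of 1] in simp)
  show ?thesis
    by (rule tendsto_sandwich[OF eventually_mono[OF bounds] eventually_mono[OF bounds] lower tendsto_const])
      auto
qed

end

lemma num_indec_sd_eq:
  fixes F :: "'a::{finite,field} itself"
  shows "real (num_indec_sd F n)
    = real (num_sd TYPE('a) n) - real (card {C :: (nat \<Rightarrow> 'a) set. self_dual n C \<and> decomposable n C})"
proof -
  let ?D = "{C :: (nat \<Rightarrow> 'a) set. self_dual n C \<and> decomposable n C}"
  have sub: "?D \<subseteq> {C. self_dual n C}" by auto
  have "{C :: (nat \<Rightarrow> 'a) set. self_dual n C \<and> indecomposable n C} = {C. self_dual n C} - ?D"
    unfolding indecomposable_def by auto
  then show ?thesis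
    unfolding num_indec_sd_def num_sd_def
    using card_Diff_subset[OF finite_subset[OF sub finite_self_dual_codes] sub]
      card_mono[OF finite_self_dual_codes sub] by (simp add: of_nat_diff)
qed

lemma sd_growth_num_sd: "sd_growth (\<lambda>n. real (num_sd TYPE('a::{finite,field}) n)) (real CARD('a))"
proof
  show "2 \<le> real CARD('a)" using card_field_ge_2[where 'a = 'a] by simp
  show "0 \<le> real (num_sd TYPE('a) n)" "odd n \<Longrightarrow> real (num_sd TYPE('a) n) = 0" for n
    by (simp_all add: num_sd_odd)
  show "real (num_sd TYPE('a) (2 * k)) \<le> 4 ^ k * real CARD('a) ^ (k * k + k)" for k
    using of_nat_mono[OF num_sd_le[of k, where 'a = 'a]] by simp
  show "real (num_sd TYPE('a) (2 * k2)) * real CARD('a) ^ (k1 * k2 + (\<Sum>j<k1. j))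
      \<le> real (num_sd TYPE('a) (2 * (k1 + k2))) * real CARD('a) ^ k1"
    if "1 \<le> k1" "k1 \<le> k2" "real (num_sd TYPE('a) (2 * k1)) \<noteq> 0" for k1 k2
    using of_nat_mono[OF num_sd_gluing_bound[of k1 k2, where 'a = 'a]] that by simp
qed

theorem mainTheorem10:
  fixes F :: "'a::{finite,field} itself"
  shows "filterlim (\<lambda>n. real (num_indec_sd F n) / real (num_sd F n)) (nhds 1)
           (inf sequentially (principal {n. even n \<and> num_sd F n \<noteq> 0}))"
proof -
  let ?g = "\<lambda>n. real (num_sd TYPE('a) n)"
  let ?D = "\<lambda>n. real (card {C :: (nat \<Rightarrow> 'a) set. self_dual n C \<and> decomposable n C})"
  interpret sd_growth ?g "real CARD('a)" by (rule sd_growth_num_sd)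
  have "((\<lambda>n. (?g n - ?D n) / ?g n) \<longlongrightarrow> 1) (inf sequentially (principal {n. even n \<and> ?g n \<noteq> 0}))"
    using of_nat_mono[OF card_decomposable_self_dual_le] by (intro ratio_tendsto_1) simp_all
  moreover have "num_sd F = num_sd TYPE('a)" by (simp add: num_sd_def fun_eq_iff)
  ultimately show ?thesis by (simp add: num_indec_sd_eq)
qed

end
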